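(* Let $S^0$ be a left ample adequate semigroup with semilattice of idempotents $E^0$, and let $I=\bigcup_{x\in E^0}L_x$ be a left regular band with semilattice transversal $E^0$. Suppose there is a left action $S^0\times I\to I$, $(x,e)\mapsto x\ast e$ (so $(xy)\ast e=x\ast(y\ast e)$), distributive over the multiplication of $I$ (so $x\ast(ef)=(x\ast e)(x\ast f)$), satisfying: 1. for all $x,y\in S^0$, $x\ast y^+=(xy)^+$; 2. if $x,x_1,x_2\in S^0$, $e_1\in L_{x_1^+}$, $e_2\in L_{x_2^+}$ and $x^+(x\ast e_1)=x^+(x\ast e_2)$ and $xx_1=xx_2$, then $x^\ast\ast e_1=x^\ast\ast e_2$ and $x^\ast x_1=x^\ast x_2$. Define on $W=\{(e,x)\in I\times S^0: e\in L_{x^+}\}$ the multiplication $(e,x)(g,y)=(e(x\ast g),xy)$. Then $W$ is a left adequate, quasi-adequate semigroup with an admissible, left ample, adequate transversal isomorphic to $S^0$. If in addition 3. $x^+\ast e=x^+e$ for all $e\in I$, $x\in S^0$, then $I(W)\cong I$. Moreover every left adequate, quasi-adequate semigroup with a left ample, admissible adequate transversal can be constructed (up to isomorphism) in this way.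
   Context: For a semigroup $S$, $S^1$ is $S$ with an identity adjoined, $E(S)$ its idempotents, $\mathcal{L},\mathcal{R}$ Green's relations. $\mathcal{R}^\ast=\{(a,b):\forall x,y\in S^1,\ xa=ya\iff xb=yb\}$, $\mathcal{L}^\ast=\{(a,b):\forall x,y\in S^1,\ ax=ay\iff bx=by\}$. $S$ is abundant if each $\mathcal{R}^\ast$- and $\mathcal{L}^\ast$-class contains an idempotent; adequate if also idempotents commute (then $a^+$, $a^\ast$ are the unique idempotents $\mathcal{R}^\ast$-, resp. $\mathcal{L}^\ast$-related to $a$); left adequate if abundant and each $\mathcal{R}^\ast$-class contains a unique idempotent. An adequate semigroup $T$ is left ample if $ae=(ae)^+a$ for all $a\in T$, $e\in E(T)$. An abundant subsemigroup $U$ of abundant $S$ is a $\ast$-subsemigroup if $\mathcal{L}^\ast(U)=\mathcal{L}^\ast(S)\cap(U\times U)$, $\mathcal{R}^\ast(U)=\mathcal{R}^\ast(S)\cap(U\times U)$. An adequate $\ast$-subsemigroup $S^0$ of abundant $S$ is an adequate transversal if each $x\in S$ has a unique $\overline{x}\in S^0$ and idempotents $e,f$ (then unique, written $e_x,f_x$) with $x=e\overline{x}f$, $e\,\mathcal{L}\,\overline{x}^+$, $f\,\mathcal{R}\,\overline{x}^\ast$; $I(S)=\{e_x:x\in S\}$. Quasi-adequate: abundant with $E(S)$ a subsemigroup; the transversal is admissible if $\overline{xy}=\overline{x}\,\overline{y}$ for all $x,y$. A left regular band satisfies $xyx=xy$; $E^0$ is a semilattice transversal of $I$ if it is a subsemilattice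 of $I$ and each element of $I$ has exactly one inverse in $E^0$. For $x\in E^0$, $L_x$ is the $\mathcal{L}$-class of $x$ in $I$. *)

theory Defs
  imports Main
begin

definition semigroup :: "'a set \<Rightarrow> ('a \<Rightarrow> 'a \<Rightarrow> 'a) \<Rightarrow> bool" where
  "semigroup S m \<longleftrightarrow> (\<forall>x\<in>S. \<forall>y\<in>S. m x y \<in> S)
     \<and> (\<forall>x\<in>S. \<forall>y\<in>S. \<forall>z\<in>S. m (m x y) z = m x (m y z))"

definition idems :: "'a set \<Rightarrow> ('a \<Rightarrow> 'a \<Rightarrow> 'a) \<Rightarrow> 'a set" where
  "idems S m = {e \<in> S. m e e = e}"

text \<open>S^1: None is the adjoined identity.\<close>
definition S1 :: "'a set \<Rightarrow> 'a option set" where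
  "S1 S = insert None (Some ` S)"

fun lmult1 :: "('a \<Rightarrow> 'a \<Rightarrow> 'a) \<Rightarrow> 'a option \<Rightarrow> 'a \<Rightarrow> 'a" where
  "lmult1 m None a = a"
| "lmult1 m (Some x) a = m x a"

fun rmult1 :: "('a \<Rightarrow> 'a \<Rightarrow> 'a) \<Rightarrow> 'a \<Rightarrow> 'a option \<Rightarrow> 'a" where
  "rmult1 m a None = a"
| "rmult1 m a (Some x) = m a x"

definition Rstar :: "'a set \<Rightarrow> ('a \<Rightarrow> 'a \<Rightarrow> 'a) \<Rightarrow> 'a \<Rightarrow> 'a \<Rightarrow> bool" where
  "Rstar S m a b \<longleftrightarrow> a \<in> S \<and> b \<in> S \<and>
     (\<forall>x\<in>S1 S. \<forall>y\<in>S1 S. lmult1 m x a = lmult1 m y a \<longleftrightarrow> lmult1 m x b = lmult1 m y b)"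

definition Lstar :: "'a set \<Rightarrow> ('a \<Rightarrow> 'a \<Rightarrow> 'a) \<Rightarrow> 'a \<Rightarrow> 'a \<Rightarrow> bool" where
  "Lstar S m a b \<longleftrightarrow> a \<in> S \<and> b \<in> S \<and>
     (\<forall>x\<in>S1 S. \<forall>y\<in>S1 S. rmult1 m a x = rmult1 m a y \<longleftrightarrow> rmult1 m b x = rmult1 m b y)"

definition greenL :: "'a set \<Rightarrow> ('a \<Rightarrow> 'a \<Rightarrow> 'a) \<Rightarrow> 'a \<Rightarrow> 'a \<Rightarrow> bool" where
  "greenL S m a b \<longleftrightarrow> a \<in> S \<and> b \<in> S \<and>
     (\<lambda>x. lmult1 m x a) ` S1 S = (\<lambda>x. lmult1 m x b) ` S1 S"

definition greenR :: "'a set \<Rightarrow> ('a \<Rightarrow> 'a \<Rightarrow> 'a) \<Rightarrow> 'a \<Rightarrow> 'a \<Rightarrow> bool" where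
  "greenR S m a b \<longleftrightarrow> a \<in> S \<and> b \<in> S \<and>
     (\<lambda>x. rmult1 m a x) ` S1 S = (\<lambda>x. rmult1 m b x) ` S1 S"

definition Lclass :: "'a set \<Rightarrow> ('a \<Rightarrow> 'a \<Rightarrow> 'a) \<Rightarrow> 'a \<Rightarrow> 'a set" where
  "Lclass S m x = {a. greenL S m a x}"

definition abundant :: "'a set \<Rightarrow> ('a \<Rightarrow> 'a \<Rightarrow> 'a) \<Rightarrow> bool" where
  "abundant S m \<longleftrightarrow> semigroup S m
     \<and> (\<forall>a\<in>S. \<exists>e\<in>idems S m. Rstar S m a e)
     \<and> (\<forall>a\<in>S. \<exists>e\<in>idems S m. Lstar S m a e)"

definition adequate :: "'a set \<Rightarrow> ('a \<Rightarrow> 'a \<Rightarrow> 'a) \<Rightarrow> bool" where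
  "adequate S m \<longleftrightarrow> abundant S m \<and> (\<forall>e\<in>idems S m. \<forall>f\<in>idems S m. m e f = m f e)"

definition left_adequate :: "'a set \<Rightarrow> ('a \<Rightarrow> 'a \<Rightarrow> 'a) \<Rightarrow> bool" where
  "left_adequate S m \<longleftrightarrow> abundant S m \<and> (\<forall>a\<in>S. \<exists>!e. e \<in> idems S m \<and> Rstar S m a e)"

definition aplus :: "'a set \<Rightarrow> ('a \<Rightarrow> 'a \<Rightarrow> 'a) \<Rightarrow> 'a \<Rightarrow> 'a" where
  "aplus S m a = (THE e. e \<in> idems S m \<and> Rstar S m a e)"

definition astar :: "'a set \<Rightarrow> ('a \<Rightarrow> 'a \<Rightarrow> 'a) \<Rightarrow> 'a \<Rightarrow> 'a" where
  "astar S m a = (THE e. e \<in> idems S m \<and> Lstar S m a e)"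

definition left_ample :: "'a set \<Rightarrow> ('a \<Rightarrow> 'a \<Rightarrow> 'a) \<Rightarrow> bool" where
  "left_ample S m \<longleftrightarrow> adequate S m \<and>
     (\<forall>a\<in>S. \<forall>e\<in>idems S m. m a e = m (aplus S m (m a e)) a)"

definition star_subsemigroup :: "'a set \<Rightarrow> 'a set \<Rightarrow> ('a \<Rightarrow> 'a \<Rightarrow> 'a) \<Rightarrow> bool" where
  "star_subsemigroup U S m \<longleftrightarrow> U \<subseteq> S \<and> abundant S m \<and> abundant U m
     \<and> (\<forall>a\<in>U. \<forall>b\<in>U. Lstar U m a b \<longleftrightarrow> Lstar S m a b)
     \<and> (\<forall>a\<in>U. \<forall>b\<in>U. Rstar U m a b \<longleftrightarrow> Rstar S m a b)"

definition decomp :: "'a set \<Rightarrow> ('a \<Rightarrow> 'a \<Rightarrow> 'a) \<Rightarrow> 'a set \<Rightarrow> 'a \<Rightarrow> 'a \<Rightarrow> 'a \<Rightarrow> 'a \<Rightarrow> bool" where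
  "decomp S m T x e t f \<longleftrightarrow> t \<in> T \<and> e \<in> idems S m \<and> f \<in> idems S m \<and> x = m (m e t) f
     \<and> greenL S m e (aplus T m t) \<and> greenR S m f (astar T m t)"

definition adequate_transversal :: "'a set \<Rightarrow> ('a \<Rightarrow> 'a \<Rightarrow> 'a) \<Rightarrow> 'a set \<Rightarrow> bool" where
  "adequate_transversal S m T \<longleftrightarrow> abundant S m \<and> adequate T m \<and> star_subsemigroup T S m
     \<and> (\<forall>x\<in>S. \<exists>!t. t \<in> T \<and> (\<exists>e f. decomp S m T x e t f))"

definition bar :: "'a set \<Rightarrow> ('a \<Rightarrow> 'a \<Rightarrow> 'a) \<Rightarrow> 'a set \<Rightarrow> 'a \<Rightarrow> 'a" where
  "bar S m T x = (THE t. t \<in> T \<and> (\<exists>e f. decomp S m T x e t f))"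

definition Iset :: "'a set \<Rightarrow> ('a \<Rightarrow> 'a \<Rightarrow> 'a) \<Rightarrow> 'a set \<Rightarrow> 'a set" where
  "Iset S m T = {e. \<exists>x\<in>S. \<exists>t f. decomp S m T x e t f}"

definition quasi_adequate :: "'a set \<Rightarrow> ('a \<Rightarrow> 'a \<Rightarrow> 'a) \<Rightarrow> bool" where
  "quasi_adequate S m \<longleftrightarrow> abundant S m \<and> (\<forall>e\<in>idems S m. \<forall>f\<in>idems S m. m e f \<in> idems S m)"

definition admissible :: "'a set \<Rightarrow> ('a \<Rightarrow> 'a \<Rightarrow> 'a) \<Rightarrow> 'a set \<Rightarrow> bool" where
  "admissible S m T \<longleftrightarrow> (\<forall>x\<in>S. \<forall>y\<in>S. bar S m T (m x y) = m (bar S m T x) (bar S m T y))"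

definition left_regular_band :: "'a set \<Rightarrow> ('a \<Rightarrow> 'a \<Rightarrow> 'a) \<Rightarrow> bool" where
  "left_regular_band S m \<longleftrightarrow> semigroup S m \<and> (\<forall>x\<in>S. m x x = x)
     \<and> (\<forall>x\<in>S. \<forall>y\<in>S. m (m x y) x = m x y)"

definition semilattice_transversal :: "'a set \<Rightarrow> ('a \<Rightarrow> 'a \<Rightarrow> 'a) \<Rightarrow> 'a set \<Rightarrow> bool" where
  "semilattice_transversal I m E0 \<longleftrightarrow> E0 \<subseteq> I
     \<and> (\<forall>e\<in>E0. \<forall>f\<in>E0. m e f \<in> E0 \<and> m e f = m f e \<and> m e e = e)
     \<and> (\<forall>a\<in>I. \<exists>!x. x \<in> E0 \<and> m (m a x) a = a \<and> m (m x a) x = x)"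

definition sg_iso :: "'a set \<Rightarrow> ('a \<Rightarrow> 'a \<Rightarrow> 'a) \<Rightarrow> 'b set \<Rightarrow> ('b \<Rightarrow> 'b \<Rightarrow> 'b) \<Rightarrow> bool" where
  "sg_iso A mA B mB \<longleftrightarrow> (\<exists>h. bij_betw h A B \<and> (\<forall>x\<in>A. \<forall>y\<in>A. h (mA x y) = mB (h x) (h y)))"

definition construction_hyps ::
  "'a set \<Rightarrow> ('a \<Rightarrow> 'a \<Rightarrow> 'a) \<Rightarrow> 'a set \<Rightarrow> ('a \<Rightarrow> 'a \<Rightarrow> 'a) \<Rightarrow> ('a \<Rightarrow> 'a \<Rightarrow> 'a) \<Rightarrow> bool" where
  "construction_hyps S0 mS I mI act \<longleftrightarrow>
     left_ample S0 mS
   \<and> left_regular_band I mI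
   \<and> semilattice_transversal I mI (idems S0 mS)
   \<and> (\<forall>e\<in>idems S0 mS. \<forall>f\<in>idems S0 mS. mI e f = mS e f)
   \<and> I = (\<Union>x\<in>idems S0 mS. Lclass I mI x)
   \<and> (\<forall>x\<in>S0. \<forall>e\<in>I. act x e \<in> I)
   \<and> (\<forall>x\<in>S0. \<forall>y\<in>S0. \<forall>e\<in>I. act (mS x y) e = act x (act y e))
   \<and> (\<forall>x\<in>S0. \<forall>e\<in>I. \<forall>f\<in>I. act x (mI e f) = mI (act x e) (act x f))
   \<and> (\<forall>x\<in>S0. \<forall>y\<in>S0. act x (aplus S0 mS y) = aplus S0 mS (mS x y))
   \<and> (\<forall>x\<in>S0. \<forall>x1\<in>S0. \<forall>x2\<in>S0.
        \<forall>e1\<in>Lclass I mI (aplus S0 mS x1). \<forall>e2\<in>Lclass I mI (aplus S0 mS x2).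
          mI (aplus S0 mS x) (act x e1) = mI (aplus S0 mS x) (act x e2) \<and> mS x x1 = mS x x2
          \<longrightarrow> act (astar S0 mS x) e1 = act (astar S0 mS x) e2
              \<and> mS (astar S0 mS x) x1 = mS (astar S0 mS x) x2)"

definition Wset :: "'a set \<Rightarrow> ('a \<Rightarrow> 'a \<Rightarrow> 'a) \<Rightarrow> 'a set \<Rightarrow> ('a \<Rightarrow> 'a \<Rightarrow> 'a) \<Rightarrow> ('a \<times> 'a) set" where
  "Wset S0 mS I mI = {(e, x). e \<in> I \<and> x \<in> S0 \<and> e \<in> Lclass I mI (aplus S0 mS x)}"

definition Wmult :: "('a \<Rightarrow> 'a \<Rightarrow> 'a) \<Rightarrow> ('a \<Rightarrow> 'a \<Rightarrow> 'a) \<Rightarrow> ('a \<Rightarrow> 'a \<Rightarrow> 'a)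
    \<Rightarrow> 'a \<times> 'a \<Rightarrow> 'a \<times> 'a \<Rightarrow> 'a \<times> 'a" where
  "Wmult mS mI act p q = (mI (fst p) (act (snd p) (fst q)), mS (snd p) (snd q))"

end

theory Submission
  imports Defs
begin

text \<open>
  For the construction, \<open>W\<close> is a semigroup because the action distributes over the band \<open>I\<close>
  and, by condition 1, \<open>e(x\<ast>g)\<close> stays \<open>\<L>\<close>-related to \<open>(xy)\<^sup>+\<close>. The \<open>\<R>\<^sup>\<ast>\<close>-class of
  \<open>(e,x)\<close> contains exactly the idempotent \<open>(e,x\<^sup>+)\<close>, and its \<open>\<L>\<^sup>\<ast>\<close>-class the idempotent
  \<open>(x\<^sup>\<ast>,x\<^sup>\<ast>)\<close>; the latter is where condition 2 is needed. The map \<open>x \<mapsto> (x\<^sup>+,x)\<close> embeds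
  \<open>S\<^sup>0\<close> as an adequate transversal, \<open>(e,x) = (e,x\<^sup>+)(x\<^sup>+,x)(x\<^sup>\<ast>,x\<^sup>\<ast>)\<close> being the unique
  decomposition, so the transversal component of \<open>(e,x)\<close> is \<open>(x\<^sup>+,x)\<close> and is multiplicative.
  The idempotents of \<open>W\<close> are the pairs \<open>(e,x)\<close> with \<open>x \<in> E\<^sup>0\<close>; under condition 3 the first
  projection maps them isomorphically onto \<open>I\<close>.

  Conversely, if \<open>S\<^sup>0\<close> is an admissible left ample transversal of \<open>S\<close>, every \<open>s\<close> factors
  uniquely as \<open>s = s\<^sup>+ t\<close> with \<open>t \<in> S\<^sup>0\<close> and \<open>s\<^sup>+ \<L> t\<^sup>+\<close>. The band \<open>I = E(S)\<close> is left
  regular with semilattice transversal \<open>E(S\<^sup>0)\<close>, \<open>S\<^sup>0\<close> acts on it by \<open>x \<ast> e = (xe)\<^sup>+\<close>, and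
  \<open>(e,x) \<mapsto> ex\<close> is an isomorphism from the constructed semigroup onto \<open>S\<close>.
\<close>

definition opp :: "('a \<Rightarrow> 'a \<Rightarrow> 'a) \<Rightarrow> 'a \<Rightarrow> 'a \<Rightarrow> 'a" where
  "opp m = (\<lambda>x y. m y x)"

lemma opp_opp [simp]: "opp (opp m) = m" by (simp add: opp_def)
lemma opp_apply [simp]: "opp m x y = m y x" by (simp add: opp_def)

lemma semigroup_closed: "semigroup S m \<Longrightarrow> x \<in> S \<Longrightarrow> y \<in> S \<Longrightarrow> m x y \<in> S"
  by (simp add: semigroup_def)

lemma semigroup_assoc:
  "semigroup S m \<Longrightarrow> x \<in> S \<Longrightarrow> y \<in> S \<Longrightarrow> z \<in> S \<Longrightarrow> m (m x y) z = m x (m y z)"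
  by (simp add: semigroup_def)

lemma semigroup_absorb_trans:
  assumes "semigroup S m" "a \<in> S" "b \<in> S" "c \<in> S" "m a c = a" "m c b = c"
  shows "m a b = a"
  using semigroup_assoc[OF assms(1,2,4,3)] assms(5,6) by simp

lemma semigroup_opp: "semigroup S m \<Longrightarrow> semigroup S (opp m)"
  by (simp add: semigroup_def)

lemma idems_opp [simp]: "idems S (opp m) = idems S m" by (simp add: idems_def)

lemma idemsD: "e \<in> idems S m \<Longrightarrow> e \<in> S \<and> m e e = e" by (simp add: idems_def)

lemma S1_None [simp]: "None \<in> S1 S" by (simp add: S1_def)
lemma S1_Some [simp]: "Some x \<in> S1 S \<longleftrightarrow> x \<in> S" by (auto simp: S1_def)

lemma rmult1_opp: "rmult1 m a x = lmult1 (opp m) x a" by (cases x) auto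

lemma lmult1_closed: "semigroup S m \<Longrightarrow> x \<in> S1 S \<Longrightarrow> a \<in> S \<Longrightarrow> lmult1 m x a \<in> S"
  by (cases x) (auto simp: semigroup_closed)

lemma lmult1_assoc:
  "semigroup S m \<Longrightarrow> x \<in> S1 S \<Longrightarrow> c \<in> S \<Longrightarrow> a \<in> S \<Longrightarrow> lmult1 m x (m c a) = m (lmult1 m x c) a"
  by (cases x) (auto simp: semigroup_assoc)

lemma Lstar_opp: "Lstar S m = Rstar S (opp m)"
  by (auto simp: fun_eq_iff Lstar_def Rstar_def rmult1_opp)

lemma greenR_opp: "greenR S m = greenL S (opp m)"
  by (auto simp: fun_eq_iff greenR_def greenL_def rmult1_opp)

lemma astar_eq_aplus_opp: "astar S m = aplus S (opp m)"
  unfolding astar_def aplus_def Lstar_opp idems_opp ..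

lemma Rstar_refl: "a \<in> S \<Longrightarrow> Rstar S m a a" by (simp add: Rstar_def)
lemma Rstar_sym: "Rstar S m a b \<Longrightarrow> Rstar S m b a" by (auto simp: Rstar_def)
lemma Rstar_trans: "Rstar S m a b \<Longrightarrow> Rstar S m b c \<Longrightarrow> Rstar S m a c" by (auto simp: Rstar_def)
lemma Rstar_in: "Rstar S m a b \<Longrightarrow> a \<in> S \<and> b \<in> S" by (auto simp: Rstar_def)

lemma Rstar_left_cancel:
  "Rstar S m a b \<Longrightarrow> x \<in> S \<Longrightarrow> y \<in> S \<Longrightarrow> m x a = m y a \<longleftrightarrow> m x b = m y b"
  unfolding Rstar_def by (metis S1_Some lmult1.simps(2))

lemma Rstar_left_unit: "Rstar S m a b \<Longrightarrow> x \<in> S \<Longrightarrow> m x a = a \<longleftrightarrow> m x b = b"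
  unfolding Rstar_def by (metis S1_Some S1_None lmult1.simps)

lemma Lstar_right_cancel:
  "Lstar S m a b \<Longrightarrow> x \<in> S \<Longrightarrow> y \<in> S \<Longrightarrow> m a x = m a y \<longleftrightarrow> m b x = m b y"
  using Rstar_left_cancel[of S "opp m" a b x y] by (simp add: Lstar_opp)

text \<open>The adjoined identity needs no separate test once some \<open>e \<in> S\<close> is a left identity for both.\<close>
lemma RstarI:
  assumes "a \<in> S" "b \<in> S" "e \<in> S" "m e a = a" "m e b = b"
    and "\<And>x y. x \<in> S \<Longrightarrow> y \<in> S \<Longrightarrow> m x a = m y a \<longleftrightarrow> m x b = m y b"
  shows "Rstar S m a b"
proof -
  define unit_as where "unit_as x = (case x of None \<Rightarrow> e | Some u \<Rightarrow> u)" for x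
  have "lmult1 m x a = m (unit_as x) a" "lmult1 m x b = m (unit_as x) b"
    "x \<in> S1 S \<Longrightarrow> unit_as x \<in> S" for x
    using assms by (cases x; auto simp: unit_as_def)+
  then show ?thesis unfolding Rstar_def using assms(1,2,6) by metis
qed

lemma Rstar_left_compat:
  assumes sg: "semigroup S m" and r: "Rstar S m a b" and c: "c \<in> S"
  shows "Rstar S m (m c a) (m c b)"
proof -
  have ab: "a \<in> S" "b \<in> S" using Rstar_in[OF r] by auto
  have "lmult1 m x (m c a) = lmult1 m y (m c a) \<longleftrightarrow> lmult1 m x (m c b) = lmult1 m y (m c b)"
    if "x \<in> S1 S" "y \<in> S1 S" for x y
  proof -
    have "Some (lmult1 m x c) \<in> S1 S" "Some (lmult1 m y c) \<in> S1 S"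
      using that sg c lmult1_closed by auto
    then show ?thesis using r that lmult1_assoc[OF sg _ c] ab unfolding Rstar_def
      by (metis lmult1.simps(2))
  qed
  then show ?thesis using ab c sg by (simp add: Rstar_def semigroup_closed)
qed

lemma Rstar_idem_iff:
  assumes sg: "semigroup S m" and e: "e \<in> idems S m" and f: "f \<in> idems S m"
  shows "Rstar S m e f \<longleftrightarrow> m e f = f \<and> m f e = e"
proof
  assume r: "Rstar S m e f"
  show "m e f = f \<and> m f e = e"
    using Rstar_left_unit[OF r] Rstar_left_unit[OF Rstar_sym[OF r]] e f by (auto simp: idems_def)
next
  assume h: "m e f = f \<and> m f e = e"
  have eS: "e \<in> S" "f \<in> S" "m e e = e" "m f f = f" using e f by (auto simp: idems_def)
  show "Rstar S m e f"
  proof (rule RstarI[where e = e])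
    fix x y assume "x \<in> S" "y \<in> S"
    then show "m x e = m y e \<longleftrightarrow> m x f = m y f"
      by (metis h semigroup_assoc[OF sg] eS(1,2))
  qed (use eS h in auto)
qed

lemma greenR_refl: "a \<in> S \<Longrightarrow> greenR S m a a" by (simp add: greenR_def)

lemma greenL_idem_iff:
  assumes sg: "semigroup S m" and e: "e \<in> idems S m" and f: "f \<in> idems S m"
  shows "greenL S m e f \<longleftrightarrow> m e f = e \<and> m f e = f"
proof -
  have absorb: "m a b = a"
    if "a \<in> idems S m" "b \<in> idems S m"
      and img: "(\<lambda>x. lmult1 m x a) ` S1 S = (\<lambda>x. lmult1 m x b) ` S1 S" for a b
  proof -
    have "a \<in> (\<lambda>x. lmult1 m x a) ` S1 S" by (rule image_eqI[where x = None]) auto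
    then obtain x where "x \<in> S1 S" "a = lmult1 m x b" using img by auto
    then show ?thesis using that(1,2) sg by (cases x) (auto simp: idems_def semigroup_assoc)
  qed
  have principal_le: "(\<lambda>x. lmult1 m x a) ` S1 S \<subseteq> (\<lambda>x. lmult1 m x b) ` S1 S"
    if "a \<in> S" "b \<in> S" "m a b = a" for a b
  proof
    fix z assume "z \<in> (\<lambda>x. lmult1 m x a) ` S1 S"
    then obtain x where x: "x \<in> S1 S" "z = lmult1 m x a" by auto
    have "z = lmult1 m (Some (lmult1 m x a)) b"
      using x that lmult1_assoc[OF sg x(1) that(1) that(2)] by simp
    moreover have "Some (lmult1 m x a) \<in> S1 S" using lmult1_closed[OF sg x(1) that(1)] by simp
    ultimately show "z \<in> (\<lambda>x. lmult1 m x b) ` S1 S" by blast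
  qed
  have "e \<in> S" "f \<in> S" using e f by (auto simp: idems_def)
  then show ?thesis
    using absorb[OF e f] absorb[OF f e] principal_le[of e f] principal_le[of f e]
    unfolding greenL_def by auto
qed

lemma greenR_idem_iff:
  assumes "semigroup S m" "e \<in> idems S m" "f \<in> idems S m"
  shows "greenR S m e f \<longleftrightarrow> m f e = e \<and> m e f = f"
  using greenL_idem_iff[OF semigroup_opp[OF assms(1)]] assms(2,3) by (simp add: greenR_opp)

definition unique_Rstar_idem :: "'a set \<Rightarrow> ('a \<Rightarrow> 'a \<Rightarrow> 'a) \<Rightarrow> bool" where
  "unique_Rstar_idem S m \<longleftrightarrow> (\<forall>a\<in>S. \<exists>!e. e \<in> idems S m \<and> Rstar S m a e)"

lemma left_adequate_unique_Rstar_idem: "left_adequate S m \<Longrightarrow> unique_Rstar_idem S m"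
  by (simp add: left_adequate_def unique_Rstar_idem_def)

lemma adequate_semigroup: "adequate S m \<Longrightarrow> semigroup S m"
  by (simp add: adequate_def abundant_def)

lemma adequate_idems_comm:
  "adequate S m \<Longrightarrow> e \<in> idems S m \<Longrightarrow> f \<in> idems S m \<Longrightarrow> m e f = m f e"
  by (simp add: adequate_def)

lemma adequate_unique_Rstar_idem:
  assumes ad: "adequate S m" shows "unique_Rstar_idem S m"
  unfolding unique_Rstar_idem_def
proof
  fix a assume "a \<in> S"
  then obtain e where e: "e \<in> idems S m" "Rstar S m a e"
    using ad by (auto simp: adequate_def abundant_def)
  have "f = e" if f: "f \<in> idems S m" "Rstar S m a f" for f
  proof -
    have "Rstar S m e f" using f e Rstar_sym Rstar_trans by metis
    then have "m e f = f" "m f e = e" using Rstar_idem_iff[OF adequate_semigroup[OF ad] e(1) f(1)] by auto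
    then show ?thesis using adequate_idems_comm[OF ad e(1) f(1)] by simp
  qed
  with e show "\<exists>!e. e \<in> idems S m \<and> Rstar S m a e" by blast
qed

lemma abundant_opp: "abundant S m \<Longrightarrow> abundant S (opp m)"
  using Lstar_opp[of S m] Lstar_opp[of S "opp m"] semigroup_opp[of S m]
  unfolding abundant_def by simp

lemma adequate_opp: "adequate S m \<Longrightarrow> adequate S (opp m)"
  by (simp add: adequate_def abundant_opp)

lemma adequate_idems_closed:
  assumes ad: "adequate S m" and e: "e \<in> idems S m" and f: "f \<in> idems S m"
  shows "m e f \<in> idems S m"
proof -
  have sg: "semigroup S m" using adequate_semigroup[OF ad] .
  have eS: "e \<in> S" "f \<in> S" "m e e = e" "m f f = f" using e f by (auto simp: idems_def)
  have "m (m e f) (m e f) = m e (m (m f e) f)" using semigroup_assoc[OF sg] eS semigroup_closed[OF sg] by simp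
  also have "\<dots> = m e (m (m e f) f)" using adequate_idems_comm[OF ad e f] by simp
  also have "\<dots> = m e (m e f)" using semigroup_assoc[OF sg] eS semigroup_closed[OF sg] by simp
  also have "\<dots> = m e f" using semigroup_assoc[OF sg, of e e f, symmetric] eS by simp
  finally show ?thesis using eS semigroup_closed[OF sg] by (auto simp: idems_def)
qed

context
  fixes S :: "'a set" and m
  assumes uniq: "unique_Rstar_idem S m"
begin

lemma aplus_idem_Rstar:
  assumes "a \<in> S" shows "aplus S m a \<in> idems S m \<and> Rstar S m a (aplus S m a)"
proof -
  have "\<exists>!e. e \<in> idems S m \<and> Rstar S m a e" using uniq assms unfolding unique_Rstar_idem_def by blast
  from theI'[OF this] show ?thesis unfolding aplus_def .
qed

lemma aplus_idem: "a \<in> S \<Longrightarrow> aplus S m a \<in> idems S m"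
  by (simp add: aplus_idem_Rstar)

lemma aplus_Rstar: "a \<in> S \<Longrightarrow> Rstar S m a (aplus S m a)"
  by (simp add: aplus_idem_Rstar)

lemma aplus_eqI:
  assumes "a \<in> S" "e \<in> idems S m" "Rstar S m a e" shows "aplus S m a = e"
proof -
  have "\<exists>!e. e \<in> idems S m \<and> Rstar S m a e" using uniq assms(1) unfolding unique_Rstar_idem_def by blast
  from the1_equality[OF this] show ?thesis using assms(2,3) unfolding aplus_def by blast
qed

lemma aplus_mult:
  assumes a: "a \<in> S" shows "m (aplus S m a) a = a"
proof -
  have "aplus S m a \<in> S" "m (aplus S m a) (aplus S m a) = aplus S m a"
    using idemsD[OF aplus_idem[OF a]] by auto
  then show ?thesis using Rstar_left_unit[OF Rstar_sym[OF aplus_Rstar[OF a]]] by blast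
qed

lemma aplus_of_idem:
  assumes e: "e \<in> idems S m" shows "aplus S m e = e"
  using aplus_eqI[OF _ e Rstar_refl] idemsD[OF e] by blast

lemma aplus_cong:
  assumes r: "Rstar S m a b" shows "aplus S m a = aplus S m b"
proof -
  have a: "a \<in> S" and b: "b \<in> S" using Rstar_in[OF r] by auto
  show ?thesis using aplus_eqI[OF a aplus_idem[OF b] Rstar_trans[OF r aplus_Rstar[OF b]]] .
qed

lemma aplus_mult_absorb:
  assumes sg: "semigroup S m" and a: "a \<in> S" and b: "b \<in> S"
  shows "m (aplus S m a) (aplus S m (m a b)) = aplus S m (m a b)"
proof -
  have ab: "m a b \<in> S" using semigroup_closed[OF sg a b] .
  have p: "aplus S m a \<in> S" using idemsD[OF aplus_idem[OF a]] by blast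
  have "m (aplus S m a) (m a b) = m a b"
    using semigroup_assoc[OF sg p a b] aplus_mult[OF a] by simp
  then show ?thesis using Rstar_left_unit[OF aplus_Rstar[OF ab] p] by blast
qed

end

lemma Rstar_restrict_iff:
  assumes sgS: "semigroup S m" and US: "U \<subseteq> S" and sgU: "semigroup U m"
    and uniq: "unique_Rstar_idem U m" and restrict: "\<And>a. a \<in> U \<Longrightarrow> Rstar S m a (aplus U m a)"
    and a: "a \<in> U" and b: "b \<in> U"
  shows "Rstar U m a b \<longleftrightarrow> Rstar S m a b"
proof -
  let ?e = "aplus U m a" and ?f = "aplus U m b"
  have ef: "?e \<in> idems U m" "?f \<in> idems U m" using aplus_idem[OF uniq] a b by auto
  then have efS: "?e \<in> idems S m" "?f \<in> idems S m" using US by (auto simp: idems_def)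
  have rU: "Rstar U m a ?e" "Rstar U m b ?f" using aplus_Rstar[OF uniq] a b by auto
  have "Rstar U m a b \<longleftrightarrow> Rstar U m ?e ?f"
    by (meson rU Rstar_sym Rstar_trans)
  also have "\<dots> \<longleftrightarrow> Rstar S m ?e ?f"
    using Rstar_idem_iff[OF sgU ef] Rstar_idem_iff[OF sgS efS] by simp
  also have "\<dots> \<longleftrightarrow> Rstar S m a b"
    by (meson restrict a b Rstar_sym Rstar_trans)
  finally show ?thesis .
qed

definition sg_iso_via :: "'a set \<Rightarrow> ('a \<Rightarrow> 'a \<Rightarrow> 'a) \<Rightarrow> 'b set \<Rightarrow> ('b \<Rightarrow> 'b \<Rightarrow> 'b) \<Rightarrow> ('a \<Rightarrow> 'b) \<Rightarrow> bool"
  where "sg_iso_via A m B m' h \<longleftrightarrow> semigroup A m \<and> semigroup B m' \<and> bij_betw h A B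
     \<and> (\<forall>x\<in>A. \<forall>y\<in>A. h (m x y) = m' (h x) (h y))"

lemma sg_iso_via_opp: "sg_iso_via A m B m' h \<Longrightarrow> sg_iso_via A (opp m) B (opp m') h"
  by (simp add: sg_iso_via_def semigroup_opp)

lemma sg_iso_via_sg_iso: "sg_iso_via A m B m' h \<Longrightarrow> sg_iso A m B m'"
  unfolding sg_iso_via_def sg_iso_def by blast

context
  fixes A :: "'a set" and m and B :: "'b set" and m' and h
  assumes iso: "sg_iso_via A m B m' h"
begin

lemma iso_semigroup: "semigroup A m" using iso by (simp add: sg_iso_via_def)
lemma iso_in: "x \<in> A \<Longrightarrow> h x \<in> B" using iso by (auto simp: sg_iso_via_def bij_betw_def)
lemma iso_inj: "x \<in> A \<Longrightarrow> y \<in> A \<Longrightarrow> h x = h y \<Longrightarrow> x = y"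
  using iso by (auto simp: sg_iso_via_def bij_betw_def inj_on_def)
lemma iso_surj: "b \<in> B \<Longrightarrow> \<exists>a\<in>A. b = h a"
  using iso by (auto simp: sg_iso_via_def bij_betw_def)
lemma iso_hom: "x \<in> A \<Longrightarrow> y \<in> A \<Longrightarrow> h (m x y) = m' (h x) (h y)"
  using iso by (simp add: sg_iso_via_def)

lemma iso_mult_eq_iff: "x \<in> A \<Longrightarrow> y \<in> A \<Longrightarrow> u \<in> A \<Longrightarrow> v \<in> A \<Longrightarrow>
    m x y = m u v \<longleftrightarrow> m' (h x) (h y) = m' (h u) (h v)"
  using iso_inj[OF semigroup_closed[OF iso_semigroup, of x y] semigroup_closed[OF iso_semigroup, of u v]]
    iso_hom[of x y] iso_hom[of u v] by auto

lemma iso_idems: "a \<in> A \<Longrightarrow> a \<in> idems A m \<longleftrightarrow> h a \<in> idems B m'"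
  using iso_inj[OF semigroup_closed[OF iso_semigroup, of a a]] iso_hom[of a a] iso_in[of a]
  unfolding idems_def by auto

lemma iso_S1: "map_option h ` S1 A = S1 B"
  unfolding S1_def using iso by (auto simp: sg_iso_via_def bij_betw_def image_image)

lemma iso_lmult1: "x \<in> S1 A \<Longrightarrow> a \<in> A \<Longrightarrow> h (lmult1 m x a) = lmult1 m' (map_option h x) (h a)"
  by (cases x) (auto simp: iso_hom)

lemma iso_Rstar:
  assumes a: "a \<in> A" and b: "b \<in> A"
  shows "Rstar A m a b \<longleftrightarrow> Rstar B m' (h a) (h b)"
proof -
  have eq: "lmult1 m x c = lmult1 m y c \<longleftrightarrow>
      lmult1 m' (map_option h x) (h c) = lmult1 m' (map_option h y) (h c)"
    if "x \<in> S1 A" "y \<in> S1 A" "c \<in> A" for x y c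
    using iso_lmult1[OF that(1,3)] iso_lmult1[OF that(2,3)]
      iso_inj[OF lmult1_closed[OF iso_semigroup that(1,3)] lmult1_closed[OF iso_semigroup that(2,3)]]
    by metis
  have "(\<forall>x\<in>S1 A. \<forall>y\<in>S1 A. lmult1 m x a = lmult1 m y a \<longleftrightarrow> lmult1 m x b = lmult1 m y b)
     \<longleftrightarrow> (\<forall>x\<in>S1 A. \<forall>y\<in>S1 A.
            lmult1 m' (map_option h x) (h a) = lmult1 m' (map_option h y) (h a)
        \<longleftrightarrow> lmult1 m' (map_option h x) (h b) = lmult1 m' (map_option h y) (h b))"
    using eq a b by simp
  also have "\<dots> \<longleftrightarrow> (\<forall>x\<in>S1 B. \<forall>y\<in>S1 B.
      lmult1 m' x (h a) = lmult1 m' y (h a) \<longleftrightarrow> lmult1 m' x (h b) = lmult1 m' y (h b))"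
    unfolding iso_S1[symmetric] by simp
  finally show ?thesis unfolding Rstar_def using a b iso_in by simp
qed

lemma iso_Rstar_idem_exists:
  assumes "\<forall>b\<in>B. \<exists>e\<in>idems B m'. Rstar B m' b e"
  shows "\<forall>a\<in>A. \<exists>e\<in>idems A m. Rstar A m a e"
proof
  fix a assume a: "a \<in> A"
  obtain e' where e': "e' \<in> idems B m'" "Rstar B m' (h a) e'" using assms iso_in[OF a] by blast
  obtain e where "e \<in> A" "e' = h e" using iso_surj idemsD[OF e'(1)] by blast
  then show "\<exists>e\<in>idems A m. Rstar A m a e" using e' iso_idems iso_Rstar[OF a] by blast
qed

end

lemma iso_abundant:
  assumes iso: "sg_iso_via A m B m' h" and ab: "abundant B m'" shows "abundant A m"
  using iso_Rstar_idem_exists[OF iso] iso_Rstar_idem_exists[OF sg_iso_via_opp[OF iso]]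
    ab abundant_opp[OF ab] iso_semigroup[OF iso]
  by (simp add: abundant_def Lstar_opp)

lemma iso_adequate:
  assumes iso: "sg_iso_via A m B m' h" and ad: "adequate B m'" shows "adequate A m"
proof -
  have "m e f = m f e" if "e \<in> idems A m" "f \<in> idems A m" for e f
  proof -
    have "e \<in> A" "f \<in> A" using idemsD[OF that(1)] idemsD[OF that(2)] by auto
    then show ?thesis
      using that iso_idems[OF iso] adequate_idems_comm[OF ad] iso_mult_eq_iff[OF iso] by simp
  qed
  then show ?thesis using iso_abundant[OF iso] ad by (simp add: adequate_def)
qed

lemma iso_aplus:
  assumes iso: "sg_iso_via A m B m' h" and ad: "adequate B m'" and a: "a \<in> A"
  shows "h (aplus A m a) = aplus B m' (h a)"
proof -
  have uA: "unique_Rstar_idem A m" using adequate_unique_Rstar_idem[OF iso_adequate[OF iso ad]] .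
  have p: "aplus A m a \<in> A" using idemsD[OF aplus_idem[OF uA a]] by blast
  show ?thesis
    using aplus_eqI[OF adequate_unique_Rstar_idem[OF ad] iso_in[OF iso a]]
      aplus_idem[OF uA a] iso_idems[OF iso p] aplus_Rstar[OF uA a] iso_Rstar[OF iso a p]
    by simp
qed

lemma iso_left_ample:
  assumes iso: "sg_iso_via A m B m' h" and la: "left_ample B m'" shows "left_ample A m"
proof -
  have ad: "adequate B m'" using la by (simp add: left_ample_def)
  have sg: "semigroup A m" using iso_semigroup[OF iso] .
  have "m a e = m (aplus A m (m a e)) a" if a: "a \<in> A" and e: "e \<in> idems A m" for a e
  proof -
    have eA: "e \<in> A" using idemsD[OF e] by blast
    have ae: "m a e \<in> A" using semigroup_closed[OF sg a eA] .
    have pA: "aplus A m (m a e) \<in> A"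
      using idemsD[OF aplus_idem[OF adequate_unique_Rstar_idem[OF iso_adequate[OF iso ad]] ae]] by blast
    have "m' (h a) (h e) = m' (aplus B m' (m' (h a) (h e))) (h a)"
      using la iso_in[OF iso a] iso_idems[OF iso eA] e by (simp add: left_ample_def)
    also have "\<dots> = m' (h (aplus A m (m a e))) (h a)"
      using iso_aplus[OF iso ad ae] iso_hom[OF iso a eA] by simp
    finally show ?thesis using iso_mult_eq_iff[OF iso a eA pA a] by blast
  qed
  then show ?thesis using iso_adequate[OF iso ad] by (simp add: left_ample_def)
qed

lemma Wmult_simp [simp]: "Wmult mS mI act (e, x) (g, y) = (mI e (act x g), mS x y)"
  by (simp add: Wmult_def)

locale construction =
  fixes S0 :: "'a set" and mS and I and mI and act
  assumes hyps: "construction_hyps S0 mS I mI act"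
begin

abbreviation "E0 \<equiv> idems S0 mS"
abbreviation "pl \<equiv> aplus S0 mS"
abbreviation "st \<equiv> astar S0 mS"
abbreviation "W \<equiv> Wset S0 mS I mI"
abbreviation "Wm \<equiv> Wmult mS mI act"

lemma S0_left_ample: "left_ample S0 mS"
  and I_left_regular_band: "left_regular_band I mI"
  and E0_transversal: "semilattice_transversal I mI E0"
  and E0_mult_agree: "e \<in> E0 \<Longrightarrow> f \<in> E0 \<Longrightarrow> mI e f = mS e f"
  and act_closed: "x \<in> S0 \<Longrightarrow> e \<in> I \<Longrightarrow> act x e \<in> I"
  and act_mult: "x \<in> S0 \<Longrightarrow> y \<in> S0 \<Longrightarrow> e \<in> I \<Longrightarrow> act (mS x y) e = act x (act y e)"
  and act_distrib: "x \<in> S0 \<Longrightarrow> e \<in> I \<Longrightarrow> f \<in> I \<Longrightarrow> act x (mI e f) = mI (act x e) (act x f)"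
  and act_aplus: "x \<in> S0 \<Longrightarrow> y \<in> S0 \<Longrightarrow> act x (pl y) = pl (mS x y)"
  and act_cancel: "x \<in> S0 \<Longrightarrow> x1 \<in> S0 \<Longrightarrow> x2 \<in> S0 \<Longrightarrow>
      e1 \<in> Lclass I mI (pl x1) \<Longrightarrow> e2 \<in> Lclass I mI (pl x2) \<Longrightarrow>
      mI (pl x) (act x e1) = mI (pl x) (act x e2) \<Longrightarrow> mS x x1 = mS x x2 \<Longrightarrow>
      act (st x) e1 = act (st x) e2 \<and> mS (st x) x1 = mS (st x) x2"
  using hyps unfolding construction_hyps_def by blast+

lemma I_union_Lclass: "I = (\<Union>x\<in>E0. Lclass I mI x)"
  using hyps unfolding construction_hyps_def by (elim conjE)

lemma S0_adequate: "adequate S0 mS" using S0_left_ample by (simp add: left_ample_def)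
lemma S0_semigroup: "semigroup S0 mS" using adequate_semigroup[OF S0_adequate] .
lemma S0_closed: "a \<in> S0 \<Longrightarrow> b \<in> S0 \<Longrightarrow> mS a b \<in> S0" using semigroup_closed[OF S0_semigroup] .
lemma S0_assoc: "a \<in> S0 \<Longrightarrow> b \<in> S0 \<Longrightarrow> c \<in> S0 \<Longrightarrow> mS (mS a b) c = mS a (mS b c)"
  using semigroup_assoc[OF S0_semigroup] .
lemma S0_unique_Rstar: "unique_Rstar_idem S0 mS"
  using adequate_unique_Rstar_idem[OF S0_adequate] .
lemma S0_opp_unique_Rstar: "unique_Rstar_idem S0 (opp mS)"
  using adequate_unique_Rstar_idem[OF adequate_opp[OF S0_adequate]] .

lemma I_semigroup: "semigroup I mI" using I_left_regular_band by (simp add: left_regular_band_def)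
lemma I_idem: "a \<in> I \<Longrightarrow> mI a a = a" using I_left_regular_band by (simp add: left_regular_band_def)
lemma I_closed: "a \<in> I \<Longrightarrow> b \<in> I \<Longrightarrow> mI a b \<in> I" using semigroup_closed[OF I_semigroup] .
lemma I_assoc: "a \<in> I \<Longrightarrow> b \<in> I \<Longrightarrow> c \<in> I \<Longrightarrow> mI (mI a b) c = mI a (mI b c)"
  using semigroup_assoc[OF I_semigroup] .

lemma E0_in_I: "e \<in> E0 \<Longrightarrow> e \<in> I" using E0_transversal by (auto simp: semilattice_transversal_def)
lemma E0_in_S0: "e \<in> E0 \<Longrightarrow> e \<in> S0" by (simp add: idems_def)
lemma E0_idem: "e \<in> E0 \<Longrightarrow> mS e e = e" by (simp add: idems_def)
lemma E0_comm: "e \<in> E0 \<Longrightarrow> f \<in> E0 \<Longrightarrow> mS e f = mS f e" using adequate_idems_comm[OF S0_adequate] .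
lemma E0_closed: "e \<in> E0 \<Longrightarrow> f \<in> E0 \<Longrightarrow> mS e f \<in> E0" using adequate_idems_closed[OF S0_adequate] .

lemma pl_E0: "x \<in> S0 \<Longrightarrow> pl x \<in> E0" using aplus_idem[OF S0_unique_Rstar] .
lemma pl_Rstar: "x \<in> S0 \<Longrightarrow> Rstar S0 mS x (pl x)" using aplus_Rstar[OF S0_unique_Rstar] .
lemma pl_mult: "x \<in> S0 \<Longrightarrow> mS (pl x) x = x" using aplus_mult[OF S0_unique_Rstar] .
lemma pl_of_E0: "e \<in> E0 \<Longrightarrow> pl e = e" using aplus_of_idem[OF S0_unique_Rstar] .
lemma pl_mult_absorb: "x \<in> S0 \<Longrightarrow> y \<in> S0 \<Longrightarrow> mS (pl x) (pl (mS x y)) = pl (mS x y)"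
  using aplus_mult_absorb[OF S0_unique_Rstar S0_semigroup] .
lemma st_E0: "x \<in> S0 \<Longrightarrow> st x \<in> E0"
  using aplus_idem[OF S0_opp_unique_Rstar] by (simp add: astar_eq_aplus_opp)
lemma mult_st: "x \<in> S0 \<Longrightarrow> mS x (st x) = x"
  using aplus_mult[OF S0_opp_unique_Rstar] by (simp add: astar_eq_aplus_opp)

lemma pl_in_I: "x \<in> S0 \<Longrightarrow> pl x \<in> I" using E0_in_I[OF pl_E0] .
lemma pl_in_S0: "x \<in> S0 \<Longrightarrow> pl x \<in> S0" using E0_in_S0[OF pl_E0] .
lemma st_in_I: "x \<in> S0 \<Longrightarrow> st x \<in> I" using E0_in_I[OF st_E0] .
lemma st_in_S0: "x \<in> S0 \<Longrightarrow> st x \<in> S0" using E0_in_S0[OF st_E0] .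

lemma Lclass_I_iff: "a \<in> Lclass I mI x \<longleftrightarrow> a \<in> I \<and> x \<in> I \<and> mI a x = a \<and> mI x a = x"
proof -
  have "a \<in> I \<Longrightarrow> x \<in> I \<Longrightarrow> greenL I mI a x \<longleftrightarrow> mI a x = a \<and> mI x a = x"
    using greenL_idem_iff[OF I_semigroup] I_idem by (simp add: idems_def)
  then show ?thesis by (auto simp: Lclass_def greenL_def)
qed

lemma Lclass_absorb: "e \<in> Lclass I mI c \<Longrightarrow> f \<in> Lclass I mI c \<Longrightarrow> mI e f = e"
  using semigroup_absorb_trans[OF I_semigroup] unfolding Lclass_I_iff by blast

lemma Lclass_left_mult_eq_iff:
  assumes "e \<in> Lclass I mI c" "a \<in> I" "b \<in> I"
  shows "mI e a = mI e b \<longleftrightarrow> mI c a = mI c b"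
  using assms I_assoc unfolding Lclass_I_iff by metis

lemma Wset_iff: "(e, x) \<in> W \<longleftrightarrow> e \<in> I \<and> x \<in> S0 \<and> mI e (pl x) = e \<and> mI (pl x) e = pl x"
  unfolding Wset_def using Lclass_I_iff pl_in_I by auto

lemma Wset_Lclass: "(e, x) \<in> W \<Longrightarrow> e \<in> Lclass I mI (pl x)"
  using Wset_iff Lclass_I_iff pl_in_I by auto

lemma Wset_in: "p \<in> W \<Longrightarrow> fst p \<in> I \<and> snd p \<in> S0"
  using Wset_iff by (cases p) auto

lemma act_E0_eq_pl: "x \<in> S0 \<Longrightarrow> e \<in> E0 \<Longrightarrow> act x e = pl (mS x e)"
  using act_aplus[of x e] pl_of_E0 E0_in_S0 by simp

lemma act_E0_E0: "e \<in> E0 \<Longrightarrow> f \<in> E0 \<Longrightarrow> act e f = mS e f"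
  using act_E0_eq_pl[of e f] E0_in_S0 pl_of_E0 E0_closed by simp

lemma act_E0_Lclass:
  assumes x: "x \<in> E0" and e: "e \<in> Lclass I mI x"
  shows "act x e \<in> Lclass I mI x"
proof -
  have xx: "act x x = x" using act_E0_E0[OF x x] E0_idem[OF x] by simp
  have "x \<in> I" "x \<in> S0" "e \<in> I" "mI e x = e" "mI x e = x"
    using E0_in_I E0_in_S0 x e Lclass_I_iff by auto
  then show ?thesis
    using act_distrib[of x e x] act_distrib[of x x e] xx act_closed Lclass_I_iff by auto
qed

lemma Wmult_closed:
  assumes p: "(e, x) \<in> W" and q: "(g, y) \<in> W"
  shows "(mI e (act x g), mS x y) \<in> W"
proof -
  have h: "e \<in> I" "x \<in> S0" "mI e (pl x) = e" "mI (pl x) e = pl x"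
          "g \<in> I" "y \<in> S0" "mI g (pl y) = g" "mI (pl y) g = pl y" using p q Wset_iff by auto
  define u where "u = pl (mS x y)"
  define g' where "g' = act x g"
  have u: "u \<in> I" "u \<in> E0" unfolding u_def using pl_in_I pl_E0 h S0_closed by auto
  have g': "g' \<in> I" unfolding g'_def using act_closed h by auto
  have u_act: "u = act x (pl y)" unfolding u_def using act_aplus h by simp
  have u_pl: "mI u (pl x) = u" using E0_mult_agree[OF u(2) pl_E0] E0_comm[OF u(2) pl_E0]
      pl_mult_absorb[OF h(2) h(6)] h(2) unfolding u_def by simp
  have g'_u: "mI g' u = g'" unfolding g'_def u_act using act_distrib[OF h(2) h(5) pl_in_I[OF h(6)]] h(7) by simp
  have u_e: "mI u e = u" using I_assoc[OF u(1) pl_in_I[OF h(2)] h(1)] u_pl h(4) by simp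
  have u_g': "mI u g' = u" unfolding g'_def u_act using act_distrib[OF h(2) pl_in_I[OF h(6)] h(5)] h(8) by simp
  have "mI (mI e g') u = mI e g'" using I_assoc[OF h(1) g' u(1)] g'_u by simp
  moreover have "mI u (mI e g') = u" using I_assoc[OF u(1) h(1) g', symmetric] u_e u_g' by simp
  ultimately show ?thesis using Wset_iff I_closed[OF h(1) g'] S0_closed[OF h(2) h(6)] unfolding u_def g'_def by simp
qed

lemma W_semigroup: "semigroup W Wm"
proof -
  have "Wm (Wm p q) r = Wm p (Wm q r)" if "p \<in> W" "q \<in> W" "r \<in> W" for p q r
  proof -
    obtain e x g y f z where pq: "p = (e, x)" "q = (g, y)" "r = (f, z)" by (cases p, cases q, cases r) auto
    have h: "e \<in> I" "x \<in> S0" "g \<in> I" "y \<in> S0" "f \<in> I" "z \<in> S0" using that Wset_in pq by auto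
    have "act x (mI g (act y f)) = mI (act x g) (act (mS x y) f)"
      using act_distrib[OF h(2) h(3) act_closed[OF h(4) h(5)]] act_mult[OF h(2) h(4) h(5)] by simp
    then show ?thesis using pq h I_assoc act_closed S0_closed S0_assoc by simp
  qed
  moreover have "Wm p q \<in> W" if "p \<in> W" "q \<in> W" for p q
    using Wmult_closed that by (cases p, cases q) auto
  ultimately show ?thesis by (simp add: semigroup_def)
qed

lemma W_idems_iff: assumes p: "(e, x) \<in> W" shows "(e, x) \<in> idems W Wm \<longleftrightarrow> x \<in> E0"
proof
  assume "(e, x) \<in> idems W Wm"
  then show "x \<in> E0" using p Wset_iff by (simp add: idems_def)
next
  assume x: "x \<in> E0"
  have eL: "e \<in> Lclass I mI x" using Wset_Lclass[OF p] pl_of_E0[OF x] by simp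
  have "mI e (act x e) = e" using Lclass_absorb[OF eL act_E0_Lclass[OF x eL]] .
  then show "(e, x) \<in> idems W Wm" using p E0_idem[OF x] by (simp add: idems_def)
qed

lemma Wset_plus: "(e, x) \<in> W \<Longrightarrow> (e, pl x) \<in> W"
  using Wset_iff pl_in_S0 pl_of_E0 pl_E0 by auto

lemma Wset_star: "x \<in> S0 \<Longrightarrow> (st x, st x) \<in> W"
  using Wset_iff st_in_S0 st_in_I I_idem pl_of_E0 st_E0 by auto

lemma W_Rstar_plus: assumes p: "(e, x) \<in> W" shows "Rstar W Wm (e, x) (e, pl x)"
proof -
  have x: "x \<in> S0" using p Wset_iff by auto
  have eL: "e \<in> Lclass I mI (pl x)" using Wset_Lclass[OF p] .
  have e_act: "mI e (act (pl x) e) = e" using Lclass_absorb[OF eL act_E0_Lclass[OF pl_E0[OF x] eL]] .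
  show ?thesis
  proof (rule RstarI[where e = "(e, pl x)"])
    show "(e, x) \<in> W" "(e, pl x) \<in> W" "(e, pl x) \<in> W" using p Wset_plus by auto
    show "Wm (e, pl x) (e, x) = (e, x)" using e_act pl_mult[OF x] by simp
    show "Wm (e, pl x) (e, pl x) = (e, pl x)" using e_act E0_idem[OF pl_E0[OF x]] by simp
    fix q r assume "q \<in> W" "r \<in> W"
    then show "Wm q (e, x) = Wm r (e, x) \<longleftrightarrow> Wm q (e, pl x) = Wm r (e, pl x)"
      using Rstar_left_cancel[OF pl_Rstar[OF x]] Wset_in by (cases q, cases r) auto
  qed
qed

lemma W_Rstar_idem_unique:
  assumes p: "(e, x) \<in> W" and q: "q \<in> idems W Wm" and r: "Rstar W Wm (e, x) q"
  shows "q = (e, pl x)"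
proof -
  obtain f u where fu: "q = (f, u)" by (cases q) auto
  have x: "x \<in> S0" using p Wset_iff by auto
  have qW: "(f, u) \<in> W" using q fu by (simp add: idems_def)
  have uE: "u \<in> E0" using W_idems_iff[OF qW] q fu by simp
  have pI: "(e, pl x) \<in> idems W Wm" using W_idems_iff[OF Wset_plus[OF p]] pl_E0[OF x] by simp
  have "Rstar W Wm (e, pl x) (f, u)" using Rstar_trans[OF Rstar_sym[OF W_Rstar_plus[OF p]] r] fu by simp
  then have eq: "Wm (e, pl x) (f, u) = (f, u)" "Wm (f, u) (e, pl x) = (e, pl x)"
    using Rstar_idem_iff[OF W_semigroup pI] q fu by auto
  have u: "u = pl x" using eq E0_comm[OF uE pl_E0[OF x]] by auto
  have fL: "f \<in> Lclass I mI (pl x)" using Wset_Lclass[OF qW] pl_of_E0[OF uE] u by simp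
  have "mI e (act (pl x) f) = e"
    using Lclass_absorb[OF Wset_Lclass[OF p] act_E0_Lclass[OF pl_E0[OF x] fL]] .
  then show ?thesis using eq(1) fu u by simp
qed

lemma pl_act_eq_act_st:
  assumes x: "x \<in> S0" and g: "g \<in> I"
  shows "mI (pl x) (act x g) = act x (mI (st x) (act (st x) g))"
proof -
  have "act x (st x) = pl x" using act_E0_eq_pl[OF x st_E0[OF x]] mult_st[OF x] by simp
  then show ?thesis
    using act_mult[OF x st_in_S0[OF x] g] mult_st[OF x] act_distrib[OF x st_in_I[OF x] act_closed[OF st_in_S0[OF x] g]]
    by simp
qed

text \<open>Left multiplication by \<open>(e,x)\<close> and by \<open>(x\<^sup>\<ast>,x\<^sup>\<ast>)\<close> have the same kernel on \<open>W\<close>: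
  one direction is condition 2, the other \<open>x x\<^sup>\<ast> = x\<close>.\<close>
lemma W_left_mult_eq_iff_star:
  assumes p: "(e, x) \<in> W" and q: "(g, y) \<in> W" and r: "(g', y') \<in> W"
  shows "Wm (e, x) (g, y) = Wm (e, x) (g', y') \<longleftrightarrow> Wm (st x, st x) (g, y) = Wm (st x, st x) (g', y')"
proof -
  have x: "x \<in> S0" and gy: "g \<in> I" "y \<in> S0" "g' \<in> I" "y' \<in> S0" using p q r Wset_iff by auto
  have e_cancel: "mI e (act x g) = mI e (act x g') \<longleftrightarrow> mI (pl x) (act x g) = mI (pl x) (act x g')"
    using Lclass_left_mult_eq_iff[OF Wset_Lclass[OF p]] act_closed x gy by blast
  have "mS x y = mS x y'" if "mS (st x) y = mS (st x) y'"
    using S0_assoc[OF x st_in_S0[OF x]] gy that mult_st[OF x] by metis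
  moreover have "mI (pl x) (act x g) = mI (pl x) (act x g')"
    if "mI (st x) (act (st x) g) = mI (st x) (act (st x) g')"
    using pl_act_eq_act_st[OF x] gy that by simp
  ultimately show ?thesis
    using e_cancel act_cancel[OF x gy(2,4) Wset_Lclass[OF q] Wset_Lclass[OF r]] by auto
qed

lemma W_Lstar_star: assumes p: "(e, x) \<in> W" shows "Lstar W Wm (e, x) (st x, st x)"
proof -
  have x: "x \<in> S0" and e: "mI e (pl x) = e" using p Wset_iff by auto
  have sE: "st x \<in> E0" using st_E0[OF x] .
  have "act x (st x) = pl x" using act_E0_eq_pl[OF x sE] mult_st[OF x] by simp
  then have "Rstar W (opp Wm) (e, x) (st x, st x)"
  proof (intro RstarI[where e = "(st x, st x)"])
    show "(e, x) \<in> W" "(st x, st x) \<in> W" using p Wset_star[OF x] by auto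
    fix q r assume "q \<in> W" "r \<in> W"
    then show "opp Wm q (e, x) = opp Wm r (e, x) \<longleftrightarrow> opp Wm q (st x, st x) = opp Wm r (st x, st x)"
      using W_left_mult_eq_iff_star[OF p] by (cases q, cases r) auto
  qed (use x e sE Wset_star act_E0_E0 E0_idem I_idem E0_in_I mult_st in auto)
  then show ?thesis by (simp add: Lstar_opp)
qed

lemma W_idem_plus: "(e, x) \<in> W \<Longrightarrow> (e, pl x) \<in> idems W Wm"
  using W_idems_iff[OF Wset_plus] pl_E0 Wset_iff by blast

lemma W_idem_star: "x \<in> S0 \<Longrightarrow> (st x, st x) \<in> idems W Wm"
  using W_idems_iff[OF Wset_star] st_E0 by blast

lemma W_abundant: "abundant W Wm"
proof -
  have "\<exists>q\<in>idems W Wm. Rstar W Wm p q" "\<exists>q\<in>idems W Wm. Lstar W Wm p q" if "p \<in> W" for p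
    using that W_idem_plus W_Rstar_plus W_idem_star W_Lstar_star Wset_in by (cases p; fastforce)+
  then show ?thesis using W_semigroup by (simp add: abundant_def)
qed

lemma W_left_adequate: "left_adequate W Wm"
proof -
  have "\<exists>!q. q \<in> idems W Wm \<and> Rstar W Wm p q" if "p \<in> W" for p
    using that W_idem_plus W_Rstar_plus W_Rstar_idem_unique by (cases p) blast
  then show ?thesis using W_abundant by (simp add: left_adequate_def)
qed

lemma W_quasi_adequate: "quasi_adequate W Wm"
proof -
  have "Wm p q \<in> idems W Wm" if "p \<in> idems W Wm" "q \<in> idems W Wm" for p q
  proof -
    obtain e x f y where pq: "p = (e, x)" "q = (f, y)" by (cases p, cases q) auto
    have W: "(e, x) \<in> W" "(f, y) \<in> W" using that pq by (auto simp: idems_def)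
    then have "x \<in> E0" "y \<in> E0" using W_idems_iff that pq by auto
    then show ?thesis using W_idems_iff Wmult_closed[OF W] E0_closed pq by simp
  qed
  then show ?thesis using W_abundant by (simp add: quasi_adequate_def)
qed

definition embed :: "'a \<Rightarrow> 'a \<times> 'a" where "embed x = (pl x, x)"

definition T0 :: "('a \<times> 'a) set" where "T0 = embed ` S0"

lemma embed_in_W: "x \<in> S0 \<Longrightarrow> embed x \<in> W"
  unfolding embed_def using Wset_iff pl_in_S0 pl_in_I I_idem by auto

lemma embed_in_T0: "x \<in> S0 \<Longrightarrow> embed x \<in> T0"
  unfolding T0_def by blast

lemma embed_mult: "x \<in> S0 \<Longrightarrow> y \<in> S0 \<Longrightarrow> Wm (embed x) (embed y) = embed (mS x y)"
  unfolding embed_def using act_aplus E0_mult_agree[OF pl_E0 pl_E0] pl_mult_absorb S0_closed by simp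

lemma T0_subset_W: "T0 \<subseteq> W" unfolding T0_def using embed_in_W by auto

lemma T0_elem: "t \<in> T0 \<Longrightarrow> snd t \<in> S0 \<and> t = embed (snd t)" unfolding T0_def embed_def by auto

lemma T0_semigroup: "semigroup T0 Wm"
proof -
  have "Wm p q \<in> T0" if "p \<in> T0" "q \<in> T0" for p q
    using that embed_mult S0_closed unfolding T0_def by auto
  moreover have "Wm (Wm p q) r = Wm p (Wm q r)" if "p \<in> T0" "q \<in> T0" "r \<in> T0" for p q r
    using semigroup_assoc[OF W_semigroup] that T0_subset_W by blast
  ultimately show ?thesis by (simp add: semigroup_def)
qed

lemma T0_iso: "sg_iso_via T0 Wm S0 mS snd"
proof -
  have "bij_betw snd T0 S0"
    unfolding bij_betw_def inj_on_def T0_def embed_def by (auto simp: image_iff)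
  then show ?thesis using T0_semigroup S0_semigroup by (auto simp: sg_iso_via_def T0_def embed_def)
qed

lemma T0_left_ample: "left_ample T0 Wm" using iso_left_ample[OF T0_iso S0_left_ample] .
lemma T0_adequate: "adequate T0 Wm" using T0_left_ample by (simp add: left_ample_def)

lemma T0_aplus: assumes x: "x \<in> S0" shows "aplus T0 Wm (embed x) = (pl x, pl x)"
proof -
  have "snd (aplus T0 Wm (embed x)) = pl x"
    using iso_aplus[OF T0_iso S0_adequate embed_in_T0[OF x]] by (simp add: embed_def)
  moreover have "aplus T0 Wm (embed x) \<in> T0"
    using aplus_idem[OF adequate_unique_Rstar_idem[OF T0_adequate] embed_in_T0[OF x]] by (simp add: idems_def)
  ultimately show ?thesis using T0_elem pl_of_E0[OF pl_E0[OF x]] unfolding embed_def by metis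
qed

lemma T0_astar: assumes x: "x \<in> S0" shows "astar T0 Wm (embed x) = (st x, st x)"
proof -
  have "snd (aplus T0 (opp Wm) (embed x)) = aplus S0 (opp mS) x"
    using iso_aplus[OF sg_iso_via_opp[OF T0_iso] adequate_opp[OF S0_adequate] embed_in_T0[OF x]]
    by (simp add: embed_def)
  moreover have "aplus T0 (opp Wm) (embed x) \<in> T0"
    using aplus_idem[OF adequate_unique_Rstar_idem[OF adequate_opp[OF T0_adequate]] embed_in_T0[OF x]]
    by (simp add: idems_def)
  ultimately show ?thesis
    using T0_elem pl_of_E0[OF st_E0[OF x]] unfolding embed_def astar_eq_aplus_opp by metis
qed

lemma T0_star_subsemigroup: "star_subsemigroup T0 W Wm"
proof -
  have "Rstar W Wm t (aplus T0 Wm t)" if "t \<in> T0" for t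
    using that T0_elem T0_aplus W_Rstar_plus embed_in_W unfolding embed_def by metis
  moreover have "Rstar W (opp Wm) t (aplus T0 (opp Wm) t)" if "t \<in> T0" for t
    using that T0_elem T0_astar W_Lstar_star embed_in_W
    unfolding embed_def astar_eq_aplus_opp Lstar_opp by metis
  ultimately show ?thesis
    using Rstar_restrict_iff[OF W_semigroup T0_subset_W T0_semigroup
        adequate_unique_Rstar_idem[OF T0_adequate]]
      Rstar_restrict_iff[OF semigroup_opp[OF W_semigroup] T0_subset_W semigroup_opp[OF T0_semigroup]
        adequate_unique_Rstar_idem[OF adequate_opp[OF T0_adequate]]]
      T0_subset_W W_abundant T0_adequate
    unfolding star_subsemigroup_def Lstar_opp adequate_def by blast
qed

lemma W_decomp:
  assumes w: "(e, x) \<in> W"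
  shows "decomp W Wm T0 (e, x) (e, pl x) (embed x) (st x, st x)"
proof -
  have h: "x \<in> S0" "mI e (pl x) = e" using w Wset_iff by auto
  have pE: "pl x \<in> E0" using pl_E0 h by auto
  have pp: "act (pl x) (pl x) = pl x" using act_E0_E0[OF pE pE] E0_idem[OF pE] by simp
  have "mI (pl x) (act (pl x) e) = pl x"
    using act_E0_Lclass[OF pE Wset_Lclass[OF w]] Lclass_I_iff by simp
  then have "greenL W Wm (e, pl x) (aplus T0 Wm (embed x))"
    using greenL_idem_iff[OF W_semigroup W_idem_plus[OF w] W_idem_plus[OF embed_in_W[OF h(1), unfolded embed_def]]]
      T0_aplus[OF h(1)] pp h(2) E0_idem[OF pE] by (simp add: embed_def pl_of_E0[OF pE])
  moreover have "greenR W Wm (st x, st x) (astar T0 Wm (embed x))"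
    using T0_astar[OF h(1)] greenR_refl Wset_star[OF h(1)] by simp
  moreover have "act x (st x) = pl x" using act_E0_eq_pl[OF h(1) st_E0[OF h(1)]] mult_st[OF h(1)] by simp
  then have "Wm (Wm (e, pl x) (embed x)) (st x, st x) = (e, x)"
    using pp h(2) pl_mult[OF h(1)] mult_st[OF h(1)] unfolding embed_def by simp
  ultimately show ?thesis
    unfolding decomp_def using embed_in_T0[OF h(1)] W_idem_plus[OF w] W_idem_star[OF h(1)] by simp
qed

lemma W_decomp_unique:
  assumes w: "w \<in> W" and d: "decomp W Wm T0 w e t f"
  shows "t = embed (snd w)"
proof -
  have d': "t \<in> T0" "e \<in> idems W Wm" "f \<in> idems W Wm" "w = Wm (Wm e t) f"
    "greenL W Wm e (aplus T0 Wm t)" "greenR W Wm f (astar T0 Wm t)" using d by (auto simp: decomp_def)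
  obtain y where y: "y \<in> S0" "t = embed y" using T0_elem[OF d'(1)] by blast
  obtain e1 u f1 v where ef: "e = (e1, u)" "f = (f1, v)" by (cases e, cases f) auto
  have uv: "u \<in> E0" "v \<in> E0" using W_idems_iff d'(2,3) ef by (auto simp: idems_def)
  have pE: "pl y \<in> E0" and sE: "st y \<in> E0" using pl_E0 st_E0 y by auto
  have "Wm (e1, u) (pl y, pl y) = (e1, u) \<and> Wm (pl y, pl y) (e1, u) = (pl y, pl y)"
    using greenL_idem_iff[OF W_semigroup _ W_idem_plus[OF embed_in_W[OF y(1), unfolded embed_def]]] d'(2,5) ef
      T0_aplus[OF y(1)] y by (simp add: embed_def pl_of_E0[OF pE])
  then have u: "u = pl y" using E0_comm[OF uv(1) pE] by auto
  have "Wm (st y, st y) (f1, v) = (f1, v) \<and> Wm (f1, v) (st y, st y) = (st y, st y)"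
    using greenR_idem_iff[OF W_semigroup _ W_idem_star[OF y(1)]] d'(3,6) ef T0_astar[OF y(1)] y by simp
  then have v: "v = st y" using E0_comm[OF uv(2) sE] by auto
  have "snd w = mS (mS (pl y) y) (st y)" using d'(4) ef u v y unfolding embed_def by simp
  then show ?thesis using pl_mult[OF y(1)] mult_st[OF y(1)] y by simp
qed

lemma W_transversal_unique:
  assumes w: "w \<in> W"
  shows "\<exists>!t. t \<in> T0 \<and> (\<exists>e f. decomp W Wm T0 w e t f)"
proof (rule ex1I[where a = "embed (snd w)"])
  have "decomp W Wm T0 w (fst w, pl (snd w)) (embed (snd w)) (st (snd w), st (snd w))"
    using W_decomp[of "fst w" "snd w"] w by simp
  then show "embed (snd w) \<in> T0 \<and> (\<exists>e f. decomp W Wm T0 w e (embed (snd w)) f)"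
    using embed_in_T0 Wset_in w by blast
qed (use W_decomp_unique[OF w] in blast)

lemma W_bar: "w \<in> W \<Longrightarrow> bar W Wm T0 w = embed (snd w)"
  unfolding bar_def using the1_equality[OF W_transversal_unique] W_transversal_unique
  by (metis (no_types, lifting) W_decomp_unique)

lemma W_adequate_transversal: "adequate_transversal W Wm T0"
  unfolding adequate_transversal_def
  using W_abundant T0_adequate T0_star_subsemigroup W_transversal_unique by blast

lemma W_admissible: "admissible W Wm T0"
proof -
  have "bar W Wm T0 (Wm p q) = Wm (bar W Wm T0 p) (bar W Wm T0 q)" if "p \<in> W" "q \<in> W" for p q
    using W_bar[OF semigroup_closed[OF W_semigroup that]] W_bar that embed_mult Wset_in
    by (simp add: Wmult_def)
  then show ?thesis by (simp add: admissible_def)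
qed

lemma W_Iset_eq_idems: "Iset W Wm T0 = idems W Wm"
proof
  show "Iset W Wm T0 \<subseteq> idems W Wm" unfolding Iset_def decomp_def by blast
  show "idems W Wm \<subseteq> Iset W Wm T0"
  proof
    fix p assume p: "p \<in> idems W Wm"
    obtain f u where fu: "p = (f, u)" by (cases p) auto
    have pW: "(f, u) \<in> W" and "u \<in> E0" using p fu W_idems_iff by (auto simp: idems_def)
    then have "decomp W Wm T0 (f, u) (f, u) (embed u) (st u, st u)"
      using W_decomp[OF pW] pl_of_E0 by simp
    then show "p \<in> Iset W Wm T0" using pW fu unfolding Iset_def by blast
  qed
qed

lemma W_idems_iff_Lclass: "p \<in> idems W Wm \<longleftrightarrow> snd p \<in> E0 \<and> fst p \<in> Lclass I mI (snd p)"
proof -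
  obtain f u where fu: "p = (f, u)" by (cases p) auto
  have "(f, u) \<in> W \<longleftrightarrow> f \<in> Lclass I mI u" if "u \<in> E0"
    using that Wset_iff Lclass_I_iff E0_in_S0 E0_in_I pl_of_E0 by auto
  then show ?thesis using fu W_idems_iff by (auto simp: idems_def)
qed

lemma W_idems_semigroup: "semigroup (idems W Wm) Wm"
  using W_quasi_adequate semigroup_assoc[OF W_semigroup]
  unfolding quasi_adequate_def semigroup_def idems_def by blast

lemma W_idems_fst_bij: "bij_betw fst (idems W Wm) I"
proof -
  have L_unique: "u = v" if "u \<in> E0" "v \<in> E0" "f \<in> Lclass I mI u" "f \<in> Lclass I mI v" for f u v
  proof -
    have "mI u v = u" "mI v u = v"
      using that semigroup_absorb_trans[OF I_semigroup] E0_in_I unfolding Lclass_I_iff by blast+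
    then show ?thesis using that(1,2) E0_mult_agree E0_comm by metis
  qed
  have "inj_on fst (idems W Wm)"
  proof (rule inj_onI)
    fix p q assume "p \<in> idems W Wm" "q \<in> idems W Wm" "fst p = fst q"
    then show "p = q" using L_unique W_idems_iff_Lclass by (metis prod.collapse)
  qed
  moreover have "fst ` idems W Wm = I"
  proof
    show "fst ` idems W Wm \<subseteq> I" using W_idems_iff_Lclass by (auto simp: Lclass_I_iff)
    show "I \<subseteq> fst ` idems W Wm"
    proof
      fix a assume "a \<in> I"
      then obtain x where "x \<in> E0" "a \<in> Lclass I mI x" using I_union_Lclass by blast
      then have "(a, x) \<in> idems W Wm" using W_idems_iff_Lclass by simp
      then show "a \<in> fst ` idems W Wm" by force
    qed
  qed
  ultimately show ?thesis by (simp add: bij_betw_def)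
qed

text \<open>Condition 3 is only needed at idempotents \<open>x \<in> E\<^sup>0\<close>, where it reads \<open>x \<ast> f = xf\<close>.\<close>
lemma W_idems_iso_I:
  assumes cond3: "\<forall>e\<in>I. \<forall>x\<in>S0. act (pl x) e = mI (pl x) e"
  shows "sg_iso_via (idems W Wm) Wm I mI fst"
proof -
  have "fst (Wm p q) = mI (fst p) (fst q)" if "p \<in> idems W Wm" "q \<in> idems W Wm" for p q
  proof -
    obtain e x f y where pq: "p = (e, x)" "q = (f, y)" by (cases p, cases q) auto
    have x: "x \<in> E0" and e: "e \<in> Lclass I mI x" and f: "f \<in> I"
      using that pq W_idems_iff_Lclass Lclass_I_iff by auto
    have "act x f = mI x f" using cond3 f E0_in_S0[OF x] pl_of_E0[OF x] by metis
    moreover have ex: "mI e x = e" "e \<in> I" "x \<in> I" using e Lclass_I_iff by auto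
    ultimately show ?thesis using pq I_assoc[OF ex(2,3) f] ex(1) by simp
  qed
  then show ?thesis
    using W_idems_semigroup I_semigroup W_idems_fst_bij by (simp add: sg_iso_via_def)
qed

lemma construction_properties:
  "left_adequate W Wm \<and> quasi_adequate W Wm
   \<and> (\<exists>T. adequate_transversal W Wm T \<and> admissible W Wm T \<and> left_ample T Wm \<and> sg_iso T Wm S0 mS
      \<and> ((\<forall>e\<in>I. \<forall>x\<in>S0. act (pl x) e = mI (pl x) e) \<longrightarrow> sg_iso (Iset W Wm T) Wm I mI))"
  using W_left_adequate W_quasi_adequate W_adequate_transversal W_admissible T0_left_ample
    sg_iso_via_sg_iso[OF T0_iso] sg_iso_via_sg_iso[OF W_idems_iso_I] W_Iset_eq_idems
  by metis

end

locale ample_transversal =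
  fixes S :: "'b set" and m and T
  assumes hyps: "left_adequate S m \<and> quasi_adequate S m \<and> adequate_transversal S m T
    \<and> left_ample T m \<and> admissible S m T"
begin

abbreviation "E \<equiv> idems S m"
abbreviation "E0 \<equiv> idems T m"
abbreviation "plS \<equiv> aplus S m"
abbreviation "plT \<equiv> aplus T m"
abbreviation "stT \<equiv> astar T m"
abbreviation "barS \<equiv> bar S m T"

lemma S_left_adequate: "left_adequate S m" using hyps by blast
lemma T_left_ample: "left_ample T m" using hyps by blast
lemma E_closed: "e \<in> E \<Longrightarrow> f \<in> E \<Longrightarrow> m e f \<in> E"
  using hyps unfolding quasi_adequate_def by blast
lemma T_star_subsemigroup: "star_subsemigroup T S m"
  using hyps unfolding adequate_transversal_def by blast
lemma S_transversal_unique: "s \<in> S \<Longrightarrow> \<exists>!t. t \<in> T \<and> (\<exists>e f. decomp S m T s e t f)"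
  using hyps unfolding adequate_transversal_def by blast
lemma bar_mult: "s \<in> S \<Longrightarrow> s' \<in> S \<Longrightarrow> barS (m s s') = m (barS s) (barS s')"
  using hyps unfolding admissible_def by blast

lemma S_semigroup: "semigroup S m" using S_left_adequate by (simp add: left_adequate_def abundant_def)
lemma S_closed: "a \<in> S \<Longrightarrow> b \<in> S \<Longrightarrow> m a b \<in> S" using semigroup_closed[OF S_semigroup] .
lemma S_assoc: "a \<in> S \<Longrightarrow> b \<in> S \<Longrightarrow> c \<in> S \<Longrightarrow> m (m a b) c = m a (m b c)"
  using semigroup_assoc[OF S_semigroup] .
lemma S_unique_Rstar: "unique_Rstar_idem S m" using left_adequate_unique_Rstar_idem[OF S_left_adequate] .

lemma T_adequate: "adequate T m" using T_left_ample by (simp add: left_ample_def)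
lemma T_left_ample_mult: "a \<in> T \<Longrightarrow> e \<in> E0 \<Longrightarrow> m a e = m (plT (m a e)) a"
  using T_left_ample by (simp add: left_ample_def)
lemma T_semigroup: "semigroup T m" using adequate_semigroup[OF T_adequate] .
lemma T_closed: "a \<in> T \<Longrightarrow> b \<in> T \<Longrightarrow> m a b \<in> T" using semigroup_closed[OF T_semigroup] .
lemma T_unique_Rstar: "unique_Rstar_idem T m" using adequate_unique_Rstar_idem[OF T_adequate] .
lemma T_opp_unique_Rstar: "unique_Rstar_idem T (opp m)"
  using adequate_unique_Rstar_idem[OF adequate_opp[OF T_adequate]] .
lemma T_in_S: "t \<in> T \<Longrightarrow> t \<in> S" using T_star_subsemigroup by (auto simp: star_subsemigroup_def)
lemma T_Rstar_iff: "a \<in> T \<Longrightarrow> b \<in> T \<Longrightarrow> Rstar T m a b \<longleftrightarrow> Rstar S m a b"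
  using T_star_subsemigroup by (simp add: star_subsemigroup_def)
lemma T_Lstar_iff: "a \<in> T \<Longrightarrow> b \<in> T \<Longrightarrow> Lstar T m a b \<longleftrightarrow> Lstar S m a b"
  using T_star_subsemigroup by (simp add: star_subsemigroup_def)

lemma E_in_S: "e \<in> E \<Longrightarrow> e \<in> S" by (simp add: idems_def)
lemma E_idem: "e \<in> E \<Longrightarrow> m e e = e" by (simp add: idems_def)
lemma E0_in_T: "e \<in> E0 \<Longrightarrow> e \<in> T" by (simp add: idems_def)
lemma E0_in_E: "e \<in> E0 \<Longrightarrow> e \<in> E" using T_in_S by (auto simp: idems_def)
lemma E0_comm: "e \<in> E0 \<Longrightarrow> f \<in> E0 \<Longrightarrow> m e f = m f e" using adequate_idems_comm[OF T_adequate] .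
lemma E0_closed: "e \<in> E0 \<Longrightarrow> f \<in> E0 \<Longrightarrow> m e f \<in> E0" using adequate_idems_closed[OF T_adequate] .
lemma E_semigroup: "semigroup E m" using E_closed S_assoc E_in_S by (simp add: semigroup_def)

lemma greenL_E_iff: "a \<in> E \<Longrightarrow> b \<in> E \<Longrightarrow> greenL S m a b \<longleftrightarrow> m a b = a \<and> m b a = b"
  using greenL_idem_iff[OF S_semigroup] .

lemma plT_E0: "t \<in> T \<Longrightarrow> plT t \<in> E0" using aplus_idem[OF T_unique_Rstar] .
lemma plT_Rstar: "t \<in> T \<Longrightarrow> Rstar T m t (plT t)" using aplus_Rstar[OF T_unique_Rstar] .
lemma plT_mult: "t \<in> T \<Longrightarrow> m (plT t) t = t" using aplus_mult[OF T_unique_Rstar] .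
lemma plT_of_E0: "e \<in> E0 \<Longrightarrow> plT e = e" using aplus_of_idem[OF T_unique_Rstar] .
lemma stT_E0: "t \<in> T \<Longrightarrow> stT t \<in> E0"
  using aplus_idem[OF T_opp_unique_Rstar] by (simp add: astar_eq_aplus_opp)
lemma stT_Lstar: "t \<in> T \<Longrightarrow> Lstar T m t (stT t)"
  using aplus_Rstar[OF T_opp_unique_Rstar] by (simp add: astar_eq_aplus_opp Lstar_opp)
lemma mult_stT: "t \<in> T \<Longrightarrow> m t (stT t) = t"
  using aplus_mult[OF T_opp_unique_Rstar] by (simp add: astar_eq_aplus_opp)
lemma plT_in_T: "t \<in> T \<Longrightarrow> plT t \<in> T" using E0_in_T[OF plT_E0] .
lemma stT_in_T: "t \<in> T \<Longrightarrow> stT t \<in> T" using E0_in_T[OF stT_E0] .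
lemma plT_in_E: "t \<in> T \<Longrightarrow> plT t \<in> E" using E0_in_E[OF plT_E0] .
lemma stT_in_E: "t \<in> T \<Longrightarrow> stT t \<in> E" using E0_in_E[OF stT_E0] .
lemma plT_Rstar_S: "t \<in> T \<Longrightarrow> Rstar S m t (plT t)" using T_Rstar_iff plT_in_T plT_Rstar by blast
lemma stT_Lstar_S: "t \<in> T \<Longrightarrow> Lstar S m t (stT t)" using T_Lstar_iff stT_in_T stT_Lstar by blast

lemma plS_E: "s \<in> S \<Longrightarrow> plS s \<in> E" using aplus_idem[OF S_unique_Rstar] .
lemma plS_Rstar: "s \<in> S \<Longrightarrow> Rstar S m s (plS s)" using aplus_Rstar[OF S_unique_Rstar] .
lemma plS_eqI: "s \<in> S \<Longrightarrow> e \<in> E \<Longrightarrow> Rstar S m s e \<Longrightarrow> plS s = e" using aplus_eqI[OF S_unique_Rstar] .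
lemma plS_of_E: "e \<in> E \<Longrightarrow> plS e = e" using aplus_of_idem[OF S_unique_Rstar] .
lemma plS_cong: "Rstar S m a b \<Longrightarrow> plS a = plS b" using aplus_cong[OF S_unique_Rstar] .
lemma plS_T: "t \<in> T \<Longrightarrow> plS t = plT t" using plS_eqI[OF T_in_S plT_in_E plT_Rstar_S] .

text \<open>Quasi-adequacy makes \<open>e s\<^sup>+\<close> idempotent, and \<open>\<R>\<^sup>\<ast>\<close> is a left congruence.\<close>
lemma plS_left_E:
  assumes e: "e \<in> E" and s: "s \<in> S" shows "plS (m e s) = m e (plS s)"
  using plS_eqI[OF S_closed[OF E_in_S[OF e] s] E_closed[OF e plS_E[OF s]]
      Rstar_left_compat[OF S_semigroup plS_Rstar[OF s] E_in_S[OF e]]] .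

lemma bar_in_T_decomp: "s \<in> S \<Longrightarrow> barS s \<in> T \<and> (\<exists>e f. decomp S m T s e (barS s) f)"
  using theI'[OF S_transversal_unique] unfolding bar_def .

lemma bar_in_T: "s \<in> S \<Longrightarrow> barS s \<in> T"
  using bar_in_T_decomp by blast

lemma bar_decomp: "s \<in> S \<Longrightarrow> \<exists>e f. decomp S m T s e (barS s) f"
  using bar_in_T_decomp by blast

lemma bar_eqI:
  assumes s: "s \<in> S" and d: "decomp S m T s e t f" shows "barS s = t"
proof -
  have "t \<in> T \<and> (\<exists>e f. decomp S m T s e t f)" using d by (auto simp: decomp_def)
  then show ?thesis unfolding bar_def by (rule the1_equality[OF S_transversal_unique[OF s]])
qed

text \<open>In a decomposition \<open>s = e t f\<close> the idempotent \<open>f \<R> t\<^sup>\<ast>\<close> is forced to be \<open>t\<^sup>\<ast>\<close>, since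
  \<open>\<R>\<^sup>\<ast>\<close>-classes of \<open>S\<close> contain only one idempotent; then \<open>s = e t\<close> and \<open>e = s\<^sup>+\<close>.\<close>
lemma S_factor:
  assumes s: "s \<in> S"
  shows "s = m (plS s) (barS s)" "m (plS s) (plT (barS s)) = plS s" "m (plT (barS s)) (plS s) = plT (barS s)"
proof -
  define t where "t = barS s"
  obtain e f where d: "decomp S m T s e t f" using bar_decomp[OF s] t_def by blast
  have t: "t \<in> T" using bar_in_T[OF s] t_def by simp
  have d': "e \<in> E" "f \<in> E" "s = m (m e t) f" "greenL S m e (plT t)" "greenR S m f (stT t)"
    using d unfolding decomp_def by auto
  have "m (stT t) f = f \<and> m f (stT t) = stT t"
    using greenR_idem_iff[OF S_semigroup d'(2) stT_in_E[OF t]] d'(5) by simp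
  then have "Rstar S m (stT t) f" using Rstar_idem_iff[OF S_semigroup stT_in_E[OF t] d'(2)] by simp
  then have "plS (stT t) = f" using plS_eqI[OF E_in_S[OF stT_in_E[OF t]] d'(2)] by blast
  then have "f = stT t" using plS_of_E[OF stT_in_E[OF t]] by simp
  then have s_eq: "s = m e t"
    using d'(3) S_assoc[OF E_in_S[OF d'(1)] T_in_S[OF t] T_in_S[OF stT_in_T[OF t]]] mult_stT[OF t] by simp
  have eL: "m e (plT t) = e" "m (plT t) e = plT t" using greenL_E_iff[OF d'(1) plT_in_E[OF t]] d'(4) by auto
  have "Rstar S m (m e t) (m e (plT t))" using Rstar_left_compat[OF S_semigroup plT_Rstar_S[OF t] E_in_S[OF d'(1)]] .
  then have pe: "plS s = e" using plS_eqI[OF s d'(1)] s_eq eL(1) by simp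
  show "s = m (plS s) (barS s)" "m (plS s) (plT (barS s)) = plS s" "m (plT (barS s)) (plS s) = plT (barS s)"
    unfolding pe t_def[symmetric] using s_eq eL by auto
qed

lemma factor_unique:
  assumes g: "g \<in> E" and t: "t \<in> T" and gL: "m g (plT t) = g" "m (plT t) g = plT t"
  shows "barS (m g t) = t" "plS (m g t) = g"
proof -
  have gS: "g \<in> S" using E_in_S[OF g] .
  have "decomp S m T (m g t) g t (stT t)"
    unfolding decomp_def using t g stT_in_E[OF t] greenL_E_iff[OF g plT_in_E[OF t]] gL
      greenR_refl[OF E_in_S[OF stT_in_E[OF t]]] S_assoc[OF gS T_in_S[OF t] T_in_S[OF stT_in_T[OF t]]] mult_stT[OF t]
    by simp
  then show "barS (m g t) = t" using bar_eqI[OF S_closed[OF gS T_in_S[OF t]]] by blast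
  have "Rstar S m (m g t) (m g (plT t))" using Rstar_left_compat[OF S_semigroup plT_Rstar_S[OF t] gS] .
  then show "plS (m g t) = g" using plS_eqI[OF S_closed[OF gS T_in_S[OF t]] g] gL(1) by simp
qed

lemma bar_of_T: assumes t: "t \<in> T" shows "barS t = t"
  using factor_unique(1)[OF plT_in_E[OF t] t] plT_mult[OF t] E_idem[OF plT_in_E[OF t]] by simp

lemma E_bar:
  assumes e: "e \<in> E"
  shows "barS e \<in> E0" "m e (barS e) = e" "m (barS e) e = barS e"
proof -
  have eS: "e \<in> S" using E_in_S[OF e] .
  have "barS e = m (barS e) (barS e)" using bar_mult[OF eS eS] E_idem[OF e] by simp
  then show bE: "barS e \<in> E0" using bar_in_T[OF eS] by (simp add: idems_def)
  show "m e (barS e) = e" "m (barS e) e = barS e" using S_factor[OF eS] plS_of_E[OF e] plT_of_E0[OF bE] by auto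
qed

text \<open>Left ampleness of \<open>S\<^sup>0\<close> lifts to \<open>x e = (x e)\<^sup>+ x\<close> for \<open>x \<in> S\<^sup>0\<close> and arbitrary idempotents \<open>e\<close>.\<close>
lemma T_mult_E:
  assumes x: "x \<in> T" and e: "e \<in> E"
  shows "m x e = m (plS (m x e)) x"
proof -
  have xS: "x \<in> S" and eS: "e \<in> S" using T_in_S[OF x] E_in_S[OF e] by auto
  have xe: "m x e \<in> S" using S_closed[OF xS eS] .
  have bar_xe: "barS (m x e) = m x (barS e)" using bar_mult[OF xS eS] bar_of_T[OF x] by simp
  have "barS (m x e) = m (plT (barS (m x e))) x"
    using bar_xe T_left_ample_mult[OF x E_bar(1)[OF e]] by simp
  then have "m x e = m (m (plS (m x e)) (plT (barS (m x e)))) x"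
    using S_factor(1)[OF xe] S_assoc[OF plS_E[THEN E_in_S, OF xe] plT_in_E[THEN E_in_S, OF bar_in_T[OF xe]] xS]
    by metis
  then show ?thesis using S_factor(2)[OF xe] by simp
qed

lemma E_left_regular_band: "left_regular_band E m"
proof -
  have "m (m e f) e = m e f" if e: "e \<in> E" and f: "f \<in> E" for e f
  proof -
    define g where "g = m e f"
    define h where "h = m g e"
    have gh: "g \<in> E" "h \<in> E" using E_closed e f g_def h_def by auto
    have ab: "barS e \<in> E0" "barS f \<in> E0" using E_bar(1) e f by auto
    have "barS h = m (m (barS e) (barS f)) (barS e)"
      using bar_mult E_in_S e f E_closed g_def h_def by simp
    also have "\<dots> = m (barS e) (m (barS e) (barS f))" using E0_comm[OF E0_closed[OF ab] ab(1)] .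
    also have "\<dots> = m (barS e) (barS f)"
      using semigroup_assoc[OF T_semigroup, of "barS e" "barS e" "barS f"] E0_in_T ab
        E_idem[OF E0_in_E[OF ab(1)]] by simp
    also have "\<dots> = barS g" using bar_mult E_in_S e f g_def by simp
    finally have bar_hg: "barS h = barS g" .
    have "g = m g (m (barS h) h)" using E_bar(2,3)[OF gh(2)] E_bar(2)[OF gh(1)] bar_hg by simp
    also have "\<dots> = m (m g (barS h)) h"
      using S_assoc E_in_S gh E0_in_E[OF E_bar(1)[OF gh(2)]] by simp
    also have "\<dots> = m g h" using E_bar(2)[OF gh(1)] bar_hg by simp
    also have "\<dots> = h" using S_assoc E_in_S gh e E_idem[OF gh(1)] h_def by metis
    finally show ?thesis using g_def h_def by simp
  qed
  then show ?thesis using E_semigroup E_idem by (simp add: left_regular_band_def)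
qed

lemma E0_semilattice_transversal: "semilattice_transversal E m E0"
proof -
  have "x = barS a" if a: "a \<in> E" and x: "x \<in> E0" "m (m a x) a = a" "m (m x a) x = x" for a x
  proof -
    have aS: "a \<in> S" and xS: "x \<in> S" using E_in_S[OF a] E_in_S[OF E0_in_E[OF x(1)]] by auto
    have bE: "barS a \<in> E0" using E_bar(1)[OF a] .
    have T: "barS a \<in> T" "x \<in> T" using E0_in_T bE x(1) by auto
    have idem: "m (barS a) (barS a) = barS a" "m x x = x" using E_idem E0_in_E bE x(1) by auto
    have c: "m (barS a) x = m x (barS a)" using E0_comm[OF bE x(1)] .
    have "barS a = m (m (barS a) x) (barS a)"
      using arg_cong[OF x(2), of barS] bar_mult[OF S_closed[OF aS xS] aS] bar_mult[OF aS xS] bar_of_T[OF T(2)] by simp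
    then have "barS a = m (barS a) x" using c semigroup_assoc[OF T_semigroup T(2) T(1) T(1)] idem by simp
    moreover have "x = m (m x (barS a)) x"
      using arg_cong[OF x(3), of barS] bar_mult[OF S_closed[OF xS aS] xS] bar_mult[OF xS aS] bar_of_T[OF T(2)] by simp
    then have "x = m x (barS a)" using c semigroup_assoc[OF T_semigroup T(1) T(2) T(2)] idem by simp
    ultimately show ?thesis using c by simp
  qed
  then have "\<exists>!x. x \<in> E0 \<and> m (m a x) a = a \<and> m (m x a) x = x" if "a \<in> E" for a
    using that E_bar E_idem E0_in_E by (intro ex1I[where a = "barS a"]) auto
  then show ?thesis
    unfolding semilattice_transversal_def using E0_in_E E0_closed E0_comm E_idem by auto
qed

lemma Lclass_E_iff: "a \<in> Lclass E m x \<longleftrightarrow> a \<in> E \<and> x \<in> E \<and> m a x = a \<and> m x a = x"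
proof -
  have idem: "e \<in> idems E m" if "e \<in> E" for e
    using that E_idem unfolding idems_def[of E] by blast
  have "a \<in> Lclass E m x \<longleftrightarrow> a \<in> E \<and> x \<in> E \<and> greenL E m a x"
    by (auto simp: Lclass_def greenL_def)
  then show ?thesis using greenL_idem_iff[OF E_semigroup idem idem] by blast
qed

lemma E_union_Lclass: "E = (\<Union>x\<in>E0. Lclass E m x)"
proof
  show "E \<subseteq> (\<Union>x\<in>E0. Lclass E m x)"
  proof
    fix a assume a: "a \<in> E"
    then have "a \<in> Lclass E m (barS a)" using Lclass_E_iff E_bar E0_in_E by simp
    then show "a \<in> (\<Union>x\<in>E0. Lclass E m x)" using E_bar(1)[OF a] by blast
  qed
  show "(\<Union>x\<in>E0. Lclass E m x) \<subseteq> E" using Lclass_E_iff by blast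
qed

definition ind_act :: "'b \<Rightarrow> 'b \<Rightarrow> 'b" where "ind_act x e = plS (m x e)"

lemma ind_act_closed: "x \<in> T \<Longrightarrow> e \<in> E \<Longrightarrow> ind_act x e \<in> E"
  unfolding ind_act_def using plS_E S_closed T_in_S E_in_S by blast

lemma ind_act_mult:
  assumes x: "x \<in> T" and y: "y \<in> T" and e: "e \<in> E"
  shows "ind_act (m x y) e = ind_act x (ind_act y e)"
proof -
  have S: "x \<in> S" "y \<in> S" "e \<in> S" using x y e T_in_S E_in_S by auto
  have "Rstar S m (m x (m y e)) (m x (plS (m y e)))"
    using Rstar_left_compat[OF S_semigroup plS_Rstar[OF S_closed[OF S(2,3)]] S(1)] .
  then show ?thesis unfolding ind_act_def using plS_cong S_assoc S by simp
qed

lemma ind_act_distrib: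
  assumes x: "x \<in> T" and e: "e \<in> E" and f: "f \<in> E"
  shows "ind_act x (m e f) = m (ind_act x e) (ind_act x f)"
proof -
  have S: "x \<in> S" "e \<in> S" "f \<in> S" using x e f T_in_S E_in_S by auto
  have xe: "m x e \<in> S" and p: "plS (m x e) \<in> S" using S_closed S plS_E E_in_S by auto
  have "m x (m e f) = m (m x e) f" using S_assoc S by simp
  also have "\<dots> = m (m (plS (m x e)) x) f" using T_mult_E[OF x e] by simp
  also have "\<dots> = m (plS (m x e)) (m x f)" using S_assoc p S by simp
  finally show ?thesis
    unfolding ind_act_def using plS_left_E plS_E S_closed S by simp
qed

lemma ind_act_aplus: assumes x: "x \<in> T" and y: "y \<in> T" shows "ind_act x (plT y) = plT (m x y)"
proof -
  have "Rstar T m (m x y) (m x (plT y))" using Rstar_left_compat[OF T_semigroup plT_Rstar[OF y] x] .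
  then show ?thesis
    unfolding ind_act_def using aplus_cong[OF T_unique_Rstar] plS_T T_closed plT_in_T x y by simp
qed

text \<open>Since \<open>x e = (x \<ast> e) x\<close>, condition 2 reduces to the left cancellation property of \<open>x \<L>\<^sup>\<ast> x\<^sup>\<ast>\<close>.\<close>
lemma ind_act_cancel:
  assumes x: "x \<in> T" and x1: "x1 \<in> T" and x2: "x2 \<in> T" and e: "e1 \<in> E" "e2 \<in> E"
    and acts: "m (plT x) (ind_act x e1) = m (plT x) (ind_act x e2)" and xx: "m x x1 = m x x2"
  shows "ind_act (stT x) e1 = ind_act (stT x) e2 \<and> m (stT x) x1 = m (stT x) x2"
proof -
  have xS: "x \<in> S" using T_in_S[OF x] .
  have plT_act: "m (plT x) (ind_act x e) = ind_act x e" if "e \<in> E" for e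
    using plS_left_E[OF plT_in_E[OF x] S_closed[OF xS E_in_S[OF that]]]
      S_assoc[OF T_in_S[OF plT_in_T[OF x]] xS E_in_S[OF that]] plT_mult[OF x]
    unfolding ind_act_def by simp
  have "plS (m x e1) = plS (m x e2)" using acts plT_act e unfolding ind_act_def by simp
  then have "m x e1 = m x e2" using T_mult_E[OF x e(1)] T_mult_E[OF x e(2)] by metis
  then have "m (stT x) e1 = m (stT x) e2"
    using Lstar_right_cancel[OF stT_Lstar_S[OF x] E_in_S[OF e(1)] E_in_S[OF e(2)]] by simp
  moreover have "m (stT x) x1 = m (stT x) x2" using Lstar_right_cancel[OF stT_Lstar[OF x] x1 x2] xx by simp
  ultimately show ?thesis unfolding ind_act_def by simp
qed

lemma construction_hyps_ind_act: "construction_hyps T m E m ind_act"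
  unfolding construction_hyps_def
proof (intro conjI ballI impI)
  show "E = (\<Union>x\<in>E0. Lclass E m x)" by (rule E_union_Lclass)
  fix x x1 x2 e1 e2
  assume "x \<in> T" "x1 \<in> T" "x2 \<in> T" "e1 \<in> Lclass E m (plT x1)" "e2 \<in> Lclass E m (plT x2)"
    and "m (plT x) (ind_act x e1) = m (plT x) (ind_act x e2) \<and> m x x1 = m x x2"
  then have "ind_act (stT x) e1 = ind_act (stT x) e2 \<and> m (stT x) x1 = m (stT x) x2"
    using ind_act_cancel Lclass_E_iff by blast
  then show "ind_act (stT x) e1 = ind_act (stT x) e2" "m (stT x) x1 = m (stT x) x2" by auto
qed (simp_all add: T_left_ample E_left_regular_band E0_semilattice_transversal
    ind_act_closed ind_act_mult ind_act_distrib ind_act_aplus)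

lemma ind_Wset_iff: "(e, x) \<in> Wset T m E m \<longleftrightarrow> e \<in> E \<and> x \<in> T \<and> m e (plT x) = e \<and> m (plT x) e = plT x"
  unfolding Wset_def using Lclass_E_iff plT_in_E by auto

lemma ind_Wset_mult:
  assumes "(e, x) \<in> Wset T m E m" "(g, y) \<in> Wset T m E m"
  shows "m (m e x) (m g y) = m (m e (ind_act x g)) (m x y)"
proof -
  have S: "e \<in> S" "x \<in> S" "g \<in> S" "y \<in> S" and x: "x \<in> T" and g: "g \<in> E"
    using assms ind_Wset_iff E_in_S T_in_S by auto
  have a: "ind_act x g \<in> S" using E_in_S[OF ind_act_closed[OF x g]] .
  have "m (m e x) (m g y) = m e (m (m x g) y)" using S_assoc S S_closed by simp
  also have "\<dots> = m e (m (m (ind_act x g) x) y)" using T_mult_E[OF x g] unfolding ind_act_def by simp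
  also have "\<dots> = m (m e (ind_act x g)) (m x y)" using S_assoc S a S_closed by simp
  finally show ?thesis .
qed

lemma ind_Wset_iso: "sg_iso (Wset T m E m) (Wmult m m ind_act) S m"
proof -
  let ?W = "Wset T m E m" and ?h = "\<lambda>p. m (fst p) (snd p)"
  have "inj_on ?h ?W"
  proof (rule inj_onI)
    fix p q assume "p \<in> ?W" "q \<in> ?W" "?h p = ?h q"
    then show "p = q"
      using factor_unique ind_Wset_iff by (metis prod.collapse)
  qed
  moreover have "?h ` ?W = S"
  proof
    show "?h ` ?W \<subseteq> S" using ind_Wset_iff S_closed E_in_S T_in_S by auto
    show "S \<subseteq> ?h ` ?W"
    proof
      fix s assume s: "s \<in> S"
      have "(plS s, barS s) \<in> ?W" using ind_Wset_iff plS_E[OF s] bar_in_T[OF s] S_factor(2,3)[OF s] by simp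
      then show "s \<in> ?h ` ?W" using S_factor(1)[OF s] by force
    qed
  qed
  moreover have "?h (Wmult m m ind_act p q) = m (?h p) (?h q)" if "p \<in> ?W" "q \<in> ?W" for p q
    using that ind_Wset_mult by (cases p, cases q) auto
  ultimately show ?thesis unfolding sg_iso_def bij_betw_def by blast
qed

lemma realised_by_construction:
  "\<exists>(S0::'b set) mS I mI act. construction_hyps S0 mS I mI act \<and> sg_iso (Wset S0 mS I mI) (Wmult mS mI act) S m"
  using construction_hyps_ind_act ind_Wset_iso by blast

end

theorem theorem3p4:
  shows "(\<forall>(S0::'a set) mS I mI act. construction_hyps S0 mS I mI act \<longrightarrow>
            left_adequate (Wset S0 mS I mI) (Wmult mS mI act)
          \<and> quasi_adequate (Wset S0 mS I mI) (Wmult mS mI act)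
          \<and> (\<exists>T. adequate_transversal (Wset S0 mS I mI) (Wmult mS mI act) T
                \<and> admissible (Wset S0 mS I mI) (Wmult mS mI act) T
                \<and> left_ample T (Wmult mS mI act)
                \<and> sg_iso T (Wmult mS mI act) S0 mS
                \<and> ((\<forall>e\<in>I. \<forall>x\<in>S0. act (aplus S0 mS x) e = mI (aplus S0 mS x) e)
                   \<longrightarrow> sg_iso (Iset (Wset S0 mS I mI) (Wmult mS mI act) T) (Wmult mS mI act) I mI)))
       \<and> (\<forall>(S::'b set) m T. left_adequate S m \<and> quasi_adequate S m
            \<and> adequate_transversal S m T \<and> left_ample T m \<and> admissible S m T
            \<longrightarrow> (\<exists>(S0::'b set) mS I mI act. construction_hyps S0 mS I mI act
                   \<and> sg_iso (Wset S0 mS I mI) (Wmult mS mI act) S m))"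
  using construction.construction_properties ample_transversal.realised_by_construction
  unfolding construction_def ample_transversal_def by blast

end
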